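(* Assume the setting described in the context. Then: (i) there is an absolute constant $c>0$ such that $\lambda(E_q')\ge c\,\lambda(E_q)$ for all $q\ge1$, where $E_q=\{\boldsymbol\alpha\in[0,1]^2:\|q\boldsymbol\alpha-\boldsymbol\gamma\|<\psi(q)\}$; (ii) for every ball $B\subseteq[0,1)^2$ (of positive radius), $$\lim_{\substack{q\to\infty\\ q\in\operatorname{supp}(\psi)}}\frac{\lambda(B\cap E_q')}{\lambda(B)\lambda(E_q')}=1.$$
   Context: Notation: $|\cdot|$ is the maximum norm on $\mathbb{R}^2$; $\|\mathbf x\|$ is the max-norm distance from $\mathbf x\in\mathbb{R}^2$ to $\mathbb{Z}^2$; $\lambda$ is Lebesgue measure on $\mathbb{R}^2$; for an integer vector $\mathbf x=(x_1,x_2)$ and integer $n$, $\gcd(\mathbf x,n)=\gcd(x_1,x_2,n)$; $\operatorname{supp}(\psi)=\{q:\psi(q)>0\}$. Shift reduction: Fix $\boldsymbol\gamma\in\mathbb{R}^2\setminus\mathbb{Q}^2$ and $\sigma\in(0,1)$. For $k\ge0$ let $B_k\ge1$ be the smallest integer for which there exists $\mathbf A_k\in\mathbb{Z}^2$ with $|\boldsymbol\gamma-\mathbf A_k/B_k|<2^{-k}$, and fix such an $\mathbf A_k$. When $B_k\ge2$, let $1\le b_k<B_k$ be minimal such that there exists $\mathbf a_k\in\mathbb{Z}^2$ with $|\boldsymbol\gamma-\mathbf a_k/b_k|\le1/(b_kB_k^{1/2})$, and fix such an $\mathbf a_k$. Let $K_0$ be such that $B_k\ge2$ for all $k\ge K_0$.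 Let $\psi:\mathbb{N}\to[0,1/2]$ satisfy $\psi(q)<2^{-K_0+1}$ for all $q$. For $q$ with $\psi(q)>0$, let $k$ be the integer with $2^{-k}<\psi(q)\le2^{-k+1}$ and set $$S_q=\begin{cases}\{\mathbf u\in(\mathbb{Z}/q\mathbb{Z})^2:\gcd(B_k\mathbf u+\mathbf A_k,B_kq)=1\}&\text{if }B_k\le 2^{\sigma k},\\ \{\mathbf u\in(\mathbb{Z}/q\mathbb{Z})^2:\gcd(b_k\mathbf u+\mathbf a_k,b_kq)=1\}&\text{if }B_k>2^{\sigma k},\end{cases}$$ $$E_q'=\{\boldsymbol\alpha\in[0,1]^2:|q\boldsymbol\alpha-\mathbf u-\boldsymbol\gamma|<\psi(q)\text{ for some }\mathbf u\in\mathbb{Z}^2\text{ with class mod }q\text{ in }S_q\};$$ if $\psi(q)=0$, $E_q'=\emptyset$. *)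

theory Defs
  imports "HOL-Analysis.Analysis"
begin

definition maxnorm :: "real \<times> real \<Rightarrow> real" where
  "maxnorm x = max \<bar>fst x\<bar> \<bar>snd x\<bar>"

definition distZ2 :: "real \<times> real \<Rightarrow> real" where
  "distZ2 x = Inf {maxnorm (x - (real_of_int m1, real_of_int m2)) | m1 m2. True}"

definition approx :: "real \<times> real \<Rightarrow> int \<times> int \<Rightarrow> nat \<Rightarrow> real" where
  "approx \<gamma> A B = maxnorm (\<gamma> - (real_of_int (fst A) / real B, real_of_int (snd A) / real B))"

definition BB :: "real \<times> real \<Rightarrow> nat \<Rightarrow> nat" where
  "BB \<gamma> k = (LEAST B::nat. 1 \<le> B \<and> (\<exists>A. approx \<gamma> A B < 1 / 2 ^ k))"

definition bb :: "real \<times> real \<Rightarrow> nat \<Rightarrow> nat" where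
  "bb \<gamma> k = (LEAST b::nat. 1 \<le> b \<and> b < BB \<gamma> k \<and>
      (\<exists>a. approx \<gamma> a b \<le> 1 / (real b * sqrt (real (BB \<gamma> k)))))"

definition kk :: "(nat \<Rightarrow> real) \<Rightarrow> nat \<Rightarrow> nat" where
  "kk \<psi> q = (THE k::nat. 1 / 2 ^ k < \<psi> q \<and> \<psi> q \<le> 2 / 2 ^ k)"

definition gcd3 :: "int \<times> int \<Rightarrow> int \<Rightarrow> int" where
  "gcd3 x n = gcd (gcd (fst x) (snd x)) n"

text \<open>S_q, with residue classes mod q represented by pairs in {0..<q}^2.\<close>
definition Sq :: "real \<times> real \<Rightarrow> real \<Rightarrow> (nat \<Rightarrow> int \<times> int) \<Rightarrow> (nat \<Rightarrow> int \<times> int)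
                   \<Rightarrow> (nat \<Rightarrow> real) \<Rightarrow> nat \<Rightarrow> (int \<times> int) set" where
  "Sq \<gamma> \<sigma> A a \<psi> q = (let k = kk \<psi> q in
     if real (BB \<gamma> k) \<le> 2 powr (\<sigma> * real k)
     then {u \<in> {0..<int q} \<times> {0..<int q}.
             gcd3 (int (BB \<gamma> k) * fst u + fst (A k), int (BB \<gamma> k) * snd u + snd (A k))
                  (int (BB \<gamma> k) * int q) = 1}
     else {u \<in> {0..<int q} \<times> {0..<int q}.
             gcd3 (int (bb \<gamma> k) * fst u + fst (a k), int (bb \<gamma> k) * snd u + snd (a k))
                  (int (bb \<gamma> k) * int q) = 1})"

definition Eq' :: "real \<times> real \<Rightarrow> real \<Rightarrow> (nat \<Rightarrow> int \<times> int) \<Rightarrow> (nat \<Rightarrow> int \<times> int)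
                   \<Rightarrow> (nat \<Rightarrow> real) \<Rightarrow> nat \<Rightarrow> (real \<times> real) set" where
  "Eq' \<gamma> \<sigma> A a \<psi> q = (if \<psi> q = 0 then {} else
     {\<alpha> \<in> {0..1} \<times> {0..1}. \<exists>u1 u2::int.
        (u1 mod int q, u2 mod int q) \<in> Sq \<gamma> \<sigma> A a \<psi> q \<and>
        maxnorm (real q *\<^sub>R \<alpha> - (real_of_int u1, real_of_int u2) - \<gamma>) < \<psi> q})"

definition Eq :: "real \<times> real \<Rightarrow> (nat \<Rightarrow> real) \<Rightarrow> nat \<Rightarrow> (real \<times> real) set" where
  "Eq \<gamma> \<psi> q = {\<alpha> \<in> {0..1} \<times> {0..1}. distZ2 (real q *\<^sub>R \<alpha> - \<gamma>) < \<psi> q}"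

definition maxball :: "real \<times> real \<Rightarrow> real \<Rightarrow> (real \<times> real) set" where
  "maxball c r = {x. maxnorm (x - c) < r}"

text \<open>The standing setting of the shift reduction.  A k and a k are the fixed choices
  of A_k and a_k.\<close>
definition setting :: "real \<times> real \<Rightarrow> real \<Rightarrow> nat \<Rightarrow> (nat \<Rightarrow> real)
                        \<Rightarrow> (nat \<Rightarrow> int \<times> int) \<Rightarrow> (nat \<Rightarrow> int \<times> int) \<Rightarrow> bool" where
  "setting \<gamma> \<sigma> K0 \<psi> A a \<longleftrightarrow>
     \<not> (fst \<gamma> \<in> \<rat> \<and> snd \<gamma> \<in> \<rat>) \<and> 0 < \<sigma> \<and> \<sigma> < 1 \<and>
     (\<forall>k. approx \<gamma> (A k) (BB \<gamma> k) < 1 / 2 ^ k) \<and>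
     (\<forall>k. 2 \<le> BB \<gamma> k \<longrightarrow>
          approx \<gamma> (a k) (bb \<gamma> k) \<le> 1 / (real (bb \<gamma> k) * sqrt (real (BB \<gamma> k)))) \<and>
     (\<forall>k\<ge>K0. 2 \<le> BB \<gamma> k) \<and>
     (\<forall>q\<ge>1. 0 \<le> \<psi> q \<and> \<psi> q \<le> 1/2 \<and> \<psi> q < 2 powr (1 - real K0))"

end

theory Submission
  imports Defs "HOL-Number_Theory.Number_Theory" "HOL-Real_Asymp.Real_Asymp"
begin

text \<open>
  E_q' is the part of [0,1]^2 covered by the disjoint boxes of side 2 psi(q)/q centred at the points
  (u + gamma)/q, where u runs over the lattice points whose residue class lies in S_q.  In both
  cases of its definition, S_q consists of the u with gcd(D u + C, D q) = 1 for some D and C having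
  no common prime factor, so u is admissible iff for no prime p dividing q but not D both
  coordinates of D u + C are divisible by p.  Counting such u in a square of side L by sieving
  over these primes gives L^2 prod (1 - 1/p^2) + O(3^omega(q) L) with 3^omega(q) = O(sqrt q), so
  the number of boxes meeting any fixed square of side s is proportional to its area (q s)^2 up to
  a relative error O(q^(-1/2)); this gives the limit (ii).  For (i), which must hold for every q,
  a union bound shows that at least a quarter of the lattice points of any q x q square are
  admissible.
\<close>

section \<open>Boxes around the points (Z^2 + \<gamma>)/q\<close>

definition near_box :: "real \<times> real \<Rightarrow> nat \<Rightarrow> real \<Rightarrow> int \<times> int \<Rightarrow> (real \<times> real) set" where
  "near_box \<gamma> q \<psi> u = {\<alpha>. maxnorm (real q *\<^sub>R \<alpha> - (real_of_int (fst u), real_of_int (snd u)) - \<gamma>) < \<psi>}"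

definition near_set :: "real \<times> real \<Rightarrow> nat \<Rightarrow> real \<Rightarrow> (int \<times> int) set \<Rightarrow> (real \<times> real) set" where
  "near_set \<gamma> q \<psi> U = ({0..1} \<times> {0..1}) \<inter> (\<Union>u\<in>U. near_box \<gamma> q \<psi> u)"

definition int_rect :: "int \<Rightarrow> int \<Rightarrow> nat \<Rightarrow> nat \<Rightarrow> (int \<times> int) set" where
  "int_rect a1 a2 L1 L2 = {a1..<a1 + int L1} \<times> {a2..<a2 + int L2}"

lemma finite_int_rect [simp]: "finite (int_rect a1 a2 L1 L2)"
  by (simp add: int_rect_def)

lemma card_int_rect [simp]: "card (int_rect a1 a2 L1 L2) = L1 * L2"
  by (simp add: int_rect_def card_cartesian_product)

lemma mem_near_box:
  "\<alpha> \<in> near_box \<gamma> q \<psi> u \<longleftrightarrow>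
     \<bar>q * fst \<alpha> - fst u - fst \<gamma>\<bar> < \<psi> \<and> \<bar>q * snd \<alpha> - snd u - snd \<gamma>\<bar> < \<psi>"
  by (cases \<alpha>) (simp add: near_box_def maxnorm_def)

lemma near_box_eq_box:
  assumes "q \<ge> 1"
  shows "near_box \<gamma> q \<psi> u =
    box ((of_int (fst u) + fst \<gamma> - \<psi>) / q, (of_int (snd u) + snd \<gamma> - \<psi>) / q)
        ((of_int (fst u) + fst \<gamma> + \<psi>) / q, (of_int (snd u) + snd \<gamma> + \<psi>) / q)"
  using assms unfolding set_eq_iff mem_near_box mem_box Basis_prod_def
  by (auto simp: field_simps abs_less_iff)

lemma measure_near_box:
  assumes "q \<ge> 1" "\<psi> \<ge> 0"
  shows "measure lborel (near_box \<gamma> q \<psi> u) = (2 * \<psi> / q)\<^sup>2"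
  using assms unfolding near_box_eq_box[OF assms(1)] measure_lborel_box_eq
  by (auto simp: Basis_prod_def field_simps power2_eq_square)

lemma open_near_box: "q \<ge> 1 \<Longrightarrow> open (near_box \<gamma> q \<psi> u)"
  unfolding near_box_eq_box by (rule open_box)

lemma near_box_in_borel [simp]: "q \<ge> 1 \<Longrightarrow> near_box \<gamma> q \<psi> u \<in> sets borel"
  by (simp add: open_near_box)

lemma near_box_disjoint:
  assumes "\<psi> \<le> 1/2" "u \<noteq> v"
  shows "near_box \<gamma> q \<psi> u \<inter> near_box \<gamma> q \<psi> v = {}"
proof (rule ccontr)
  assume "\<not> ?thesis"
  then obtain \<alpha> where "\<alpha> \<in> near_box \<gamma> q \<psi> u" "\<alpha> \<in> near_box \<gamma> q \<psi> v" by auto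
  then have "\<bar>real_of_int (fst u) - fst v\<bar> < 1" "\<bar>real_of_int (snd u) - snd v\<bar> < 1"
    using assms(1) unfolding mem_near_box by auto
  then have "fst u = fst v" "snd u = snd v" by linarith+
  with assms(2) show False by (simp add: prod_eq_iff)
qed

lemma near_set_in_sets: "q \<ge> 1 \<Longrightarrow> near_set \<gamma> q \<psi> U \<in> sets lborel"
  unfolding near_set_def
  by (intro sets.Int borel_open borel_closed open_UN ballI open_near_box) (auto simp: closed_Times)

lemma Int_near_set_fmeasurable:
  assumes "q \<ge> 1" "R \<in> sets lborel"
  shows "R \<inter> near_set \<gamma> q \<psi> U \<in> fmeasurable lborel"
proof (rule fmeasurableI2[of "cbox (0, 0) (1, 1)"])
  show "R \<inter> near_set \<gamma> q \<psi> U \<subseteq> cbox (0, 0) (1::real, 1::real)"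
    by (auto simp: near_set_def cbox_Pair_eq)
qed (use assms near_set_in_sets in auto)

lemma measure_Int_near_set_le:
  assumes q: "q \<ge> 1" and "0 \<le> \<psi>" and R: "R \<in> sets lborel" and I: "finite I"
    and cover: "\<And>u \<alpha>. u \<in> U \<Longrightarrow> \<alpha> \<in> R \<inter> near_set \<gamma> q \<psi> {u} \<Longrightarrow> u \<in> I"
  shows "measure lborel (R \<inter> near_set \<gamma> q \<psi> U) \<le> (2 * \<psi> / q)\<^sup>2 * card (U \<inter> I)"
proof -
  have "measure lborel (R \<inter> near_set \<gamma> q \<psi> U) \<le> measure lborel (\<Union>u\<in>U \<inter> I. near_box \<gamma> q \<psi> u)"
  proof (rule measure_mono_fmeasurable)
    show "R \<inter> near_set \<gamma> q \<psi> U \<subseteq> (\<Union>u\<in>U \<inter> I. near_box \<gamma> q \<psi> u)"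
      using cover unfolding near_set_def by blast
    show "(\<Union>u\<in>U \<inter> I. near_box \<gamma> q \<psi> u) \<in> fmeasurable lborel"
      using I q by (intro fmeasurable.finite_UN) (auto simp: near_box_eq_box)
  qed (use R q near_set_in_sets in auto)
  also have "\<dots> \<le> (\<Sum>u\<in>U \<inter> I. measure lborel (near_box \<gamma> q \<psi> u))"
    using I q by (intro measure_UNION_le) auto
  also have "\<dots> = (2 * \<psi> / q)\<^sup>2 * card (U \<inter> I)"
    using measure_near_box[OF q \<open>0 \<le> \<psi>\<close>] by simp
  finally show ?thesis .
qed

lemma measure_Int_near_set_ge:
  assumes q: "q \<ge> 1" and "\<psi> \<le> 1/2" and R: "R \<in> sets lborel" and J: "finite J" "J \<subseteq> U"
    and K: "\<And>u. u \<in> J \<Longrightarrow> K u \<subseteq> R \<inter> near_set \<gamma> q \<psi> {u}"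
    and K_sets: "\<And>u. u \<in> J \<Longrightarrow> K u \<in> sets lborel"
    and K_measure: "\<And>u. u \<in> J \<Longrightarrow> measure lborel (K u) = m"
  shows "m * card J \<le> measure lborel (R \<inter> near_set \<gamma> q \<psi> U)"
proof -
  have K_box: "K u \<subseteq> near_box \<gamma> q \<psi> u" if "u \<in> J" for u
    using K[OF that] by (auto simp: near_set_def)
  have K_finite: "emeasure lborel (K u) \<noteq> \<infinity>" if u: "u \<in> J" for u
  proof -
    have "emeasure lborel (K u) \<le> emeasure lborel (near_box \<gamma> q \<psi> u)"
      using K_box[OF u] q by (intro emeasure_mono) auto
    also have "\<dots> < \<infinity>"
      unfolding near_box_eq_box[OF q] by (rule emeasure_lborel_box_finite)
    finally show ?thesis by simp
  qed
  have "disjoint_family_on K J"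
    unfolding disjoint_family_on_def
    using K_box near_box_disjoint[OF \<open>\<psi> \<le> 1/2\<close>] by blast
  then have "m * card J = measure lborel (\<Union>u\<in>J. K u)"
    using J K_sets K_finite K_measure by (subst measure_finite_Union) auto
  also have "\<dots> \<le> measure lborel (R \<inter> near_set \<gamma> q \<psi> U)"
  proof (rule measure_mono_fmeasurable)
    show "(\<Union>u\<in>J. K u) \<subseteq> R \<inter> near_set \<gamma> q \<psi> U"
      using K J(2) unfolding near_set_def by blast
  qed (use J K_sets Int_near_set_fmeasurable[OF q R] in auto)
  finally show ?thesis .
qed

lemma near_coordinate_in_cover:
  fixes q :: nat and x lo s g \<psi> :: real and u :: int
  assumes "\<bar>q * x - u - g\<bar> < \<psi>" "\<psi> \<le> 1/2" "lo \<le> x" "x \<le> lo + s"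
  shows "u \<in> {\<lfloor>q * lo - g - 1/2\<rfloor> + 1 ..< \<lfloor>q * lo - g - 1/2\<rfloor> + 1 + int (nat \<lceil>q * s + 1\<rceil>)}"
proof -
  have "q * lo \<le> q * x" "q * x \<le> q * lo + q * s"
    using assms(3,4) by (auto simp flip: distrib_left intro: mult_left_mono)
  then have "q * lo - g - 1/2 < u" "u < q * lo + q * s - g + 1/2"
    using assms(1,2) by (auto simp: abs_less_iff)
  moreover have "q * s + 1 \<le> int (nat \<lceil>q * s + 1\<rceil>)"
    by linarith
  ultimately show ?thesis by simp linarith
qed

lemma near_coordinate_inside:
  fixes q :: nat and y lo s g \<psi> :: real and u :: int
  assumes "\<bar>q * y - u - g\<bar> < \<psi>" "\<psi> \<le> 1/2" "q \<ge> 1"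
    and "u \<in> {\<lceil>q * lo - g + 1/2\<rceil> ..< \<lceil>q * lo - g + 1/2\<rceil> + int (nat \<lfloor>q * s - 1\<rfloor>)}"
  shows "lo < y \<and> y < lo + s"
proof -
  have lower: "\<lceil>q * lo - g + 1/2\<rceil> \<le> u" and upper: "u < \<lceil>q * lo - g + 1/2\<rceil> + int (nat \<lfloor>q * s - 1\<rfloor>)"
    using assms(4) by auto
  then have "int (nat \<lfloor>q * s - 1\<rfloor>) = \<lfloor>q * s - 1\<rfloor>"
    by linarith
  with upper have "u < q * (lo + s) - g - 1/2"
    by (simp add: algebra_simps) linarith
  moreover have "q * lo - g + 1/2 \<le> u"
    using lower by (simp add: ceiling_le_iff)
  ultimately have "q * lo < q * y" "q * y < q * (lo + s)"
    using assms(1,2) by (auto simp: abs_less_iff)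
  then show ?thesis
    using assms(3) by simp
qed

lemma measure_Int_near_set_le_square:
  assumes q: "q \<ge> 1" and \<psi>: "0 \<le> \<psi>" "\<psi> \<le> 1/2" and R: "R \<in> sets lborel"
    and square: "R \<inter> {0..1} \<times> {0..1} \<subseteq> {x..x + s} \<times> {y..y + s}"
  obtains a1 a2 where "measure lborel (R \<inter> near_set \<gamma> q \<psi> U)
    \<le> (2 * \<psi> / q)\<^sup>2 * card (U \<inter> int_rect a1 a2 (nat \<lceil>q * s + 1\<rceil>) (nat \<lceil>q * s + 1\<rceil>))"
proof
  show "measure lborel (R \<inter> near_set \<gamma> q \<psi> U) \<le> (2 * \<psi> / q)\<^sup>2 *
    card (U \<inter> int_rect (\<lfloor>q * x - fst \<gamma> - 1/2\<rfloor> + 1) (\<lfloor>q * y - snd \<gamma> - 1/2\<rfloor> + 1)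
      (nat \<lceil>q * s + 1\<rceil>) (nat \<lceil>q * s + 1\<rceil>))"
  proof (rule measure_Int_near_set_le[OF q \<psi>(1) R finite_int_rect])
    fix u \<alpha> assume "\<alpha> \<in> R \<inter> near_set \<gamma> q \<psi> {u}"
    then have "fst \<alpha> \<in> {x..x + s}" "snd \<alpha> \<in> {y..y + s}" "\<alpha> \<in> near_box \<gamma> q \<psi> u"
      using square by (auto simp: near_set_def)
    then show "u \<in> int_rect (\<lfloor>q * x - fst \<gamma> - 1/2\<rfloor> + 1) (\<lfloor>q * y - snd \<gamma> - 1/2\<rfloor> + 1)
      (nat \<lceil>q * s + 1\<rceil>) (nat \<lceil>q * s + 1\<rceil>)"
      unfolding int_rect_def mem_near_box mem_Times_iff
      using near_coordinate_in_cover[OF _ \<psi>(2), of q "fst \<alpha>" "fst u" "fst \<gamma>" x s]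
        near_coordinate_in_cover[OF _ \<psi>(2), of q "snd \<alpha>" "snd u" "snd \<gamma>" y s]
      by simp
  qed
qed

lemma measure_Int_near_set_ge_square:
  assumes q: "q \<ge> 1" and \<psi>: "0 \<le> \<psi>" "\<psi> \<le> 1/2" and R: "R \<in> sets lborel"
    and square: "{x<..<x + s} \<times> {y<..<y + s} \<subseteq> R \<inter> {0..1} \<times> {0..1}"
  obtains a1 a2 where "(2 * \<psi> / q)\<^sup>2 * card (U \<inter> int_rect a1 a2 (nat \<lfloor>q * s - 1\<rfloor>) (nat \<lfloor>q * s - 1\<rfloor>))
    \<le> measure lborel (R \<inter> near_set \<gamma> q \<psi> U)"
proof
  let ?J = "U \<inter> int_rect \<lceil>q * x - fst \<gamma> + 1/2\<rceil> \<lceil>q * y - snd \<gamma> + 1/2\<rceil>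
    (nat \<lfloor>q * s - 1\<rfloor>) (nat \<lfloor>q * s - 1\<rfloor>)"
  show "(2 * \<psi> / q)\<^sup>2 * card ?J \<le> measure lborel (R \<inter> near_set \<gamma> q \<psi> U)"
  proof (rule measure_Int_near_set_ge[OF q \<psi>(2) R, where K = "near_box \<gamma> q \<psi>"])
    fix u assume u: "u \<in> ?J"
    have "near_box \<gamma> q \<psi> u \<subseteq> {x<..<x + s} \<times> {y<..<y + s}"
      using u near_coordinate_inside[OF _ \<psi>(2) q]
      unfolding int_rect_def mem_near_box subset_iff mem_Times_iff by auto
    with square show "near_box \<gamma> q \<psi> u \<subseteq> R \<inter> near_set \<gamma> q \<psi> {u}"
      by (auto simp: near_set_def)
  qed (use q \<psi> measure_near_box in auto)
qed

lemma measure_near_set_ge_unit_square: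
  assumes q: "q \<ge> 1" and \<psi>: "0 < \<psi>" "\<psi> \<le> 1/2"
  shows "(\<psi> / q)\<^sup>2 * card (U \<inter> int_rect \<lceil>- fst \<gamma>\<rceil> \<lceil>- snd \<gamma>\<rceil> q q) \<le> measure lborel (near_set \<gamma> q \<psi> U)"
proof -
  let ?J = "U \<inter> int_rect \<lceil>- fst \<gamma>\<rceil> \<lceil>- snd \<gamma>\<rceil> q q"
  define h where "h = \<psi> / q"
  have h: "0 < h" "h \<le> 1/2" "q * h = \<psi>"
    using q \<psi> by (auto simp: h_def field_simps intro: order_trans[of _ "1/2" "real q / 2"])
  \<comment> \<open>a box of side h inside the square of side 2h around z, not leaving [0,1]\<close>
  define corner where "corner = (\<lambda>z::real. if z < 1/2 then z else z - h)"
  define z where "z = (\<lambda>u::int \<times> int. ((of_int (fst u) + fst \<gamma>) / q, (of_int (snd u) + snd \<gamma>) / q))"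
  define K where "K = (\<lambda>u. box (corner (fst (z u)), corner (snd (z u)))
                              (corner (fst (z u)) + h, corner (snd (z u)) + h))"
  have corner: "\<bar>y - x\<bar> < h \<and> 0 \<le> y \<and> y \<le> 1"
    if "0 \<le> x" "x < 1" "corner x < y" "y < corner x + h" for x y
    using that h unfolding corner_def by (cases "x < 1/2") (auto simp: abs_less_iff)
  have "(\<psi> / q)\<^sup>2 * card ?J \<le> measure lborel (UNIV \<inter> near_set \<gamma> q \<psi> U)"
  proof (rule measure_Int_near_set_ge[OF q \<psi>(2), where K = K])
    fix u assume u: "u \<in> ?J"
    have z: "0 \<le> fst (z u)" "fst (z u) < 1" "0 \<le> snd (z u)" "snd (z u) < 1"
      using u q by (auto simp: z_def int_rect_def field_simps ceiling_le_iff) linarith+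
    show "K u \<subseteq> UNIV \<inter> near_set \<gamma> q \<psi> {u}"
    proof
      fix y assume y: "y \<in> K u"
      obtain y1 y2 where [simp]: "y = (y1, y2)" by fastforce
      from y have "\<bar>fst y - fst (z u)\<bar> < h \<and> 0 \<le> fst y \<and> fst y \<le> 1"
        "\<bar>snd y - snd (z u)\<bar> < h \<and> 0 \<le> snd y \<and> snd y \<le> 1"
        using corner z unfolding K_def mem_box Basis_prod_def by auto
      moreover have "\<bar>q * fst y - of_int (fst u) - fst \<gamma>\<bar> = q * \<bar>fst y - fst (z u)\<bar>"
        "\<bar>q * snd y - of_int (snd u) - snd \<gamma>\<bar> = q * \<bar>snd y - snd (z u)\<bar>"
        using q by (simp_all add: z_def field_simps flip: abs_mult)
      ultimately show "y \<in> UNIV \<inter> near_set \<gamma> q \<psi> {u}"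
        using q by (auto simp: near_set_def mem_near_box h(3)[symmetric])
    qed
    show "measure lborel (K u) = (\<psi> / q)\<^sup>2"
      unfolding K_def measure_lborel_box_eq
      using h by (auto simp: Basis_prod_def power2_eq_square h_def)
  qed (auto simp: K_def)
  then show ?thesis by simp
qed

section \<open>Sifting lattice points in rectangles\<close>

definition sieve_set :: "nat set \<Rightarrow> (nat \<Rightarrow> int) \<Rightarrow> (nat \<Rightarrow> int) \<Rightarrow> (nat \<Rightarrow> int) \<Rightarrow> (int \<times> int) set" where
  "sieve_set P c e1 e2 =
     {t. \<forall>p\<in>P. \<not> (int p dvd c p * fst t + e1 p \<and> int p dvd c p * snd t + e2 p)}"

definition sieve_density :: "nat set \<Rightarrow> real" where
  "sieve_density P = (\<Prod>p\<in>P. 1 - 1 / (real p)\<^sup>2)"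

lemma dvd_linear_iff_cong:
  fixes c e m :: int
  assumes "coprime c m"
  obtains r where "\<And>x. m dvd c * x + e \<longleftrightarrow> [x = r] (mod m)"
proof -
  obtain c' where c': "[c * c' = 1] (mod m)"
    using assms cong_solve_coprime_int by blast
  have "m dvd c * (- e * c') + e"
    using cong_scalar_left[OF c', of "- e"] by (simp add: cong_iff_dvd_diff ac_simps)
  then have "m dvd c * x + e \<longleftrightarrow> m dvd c * (x - - e * c')" for x
    using dvd_add_right_iff[of m "c * (- e * c') + e" "c * (x - - e * c')"]
    by (simp add: algebra_simps)
  then have "m dvd c * x + e \<longleftrightarrow> [x = - e * c'] (mod m)" for x
    using assms by (simp add: cong_iff_dvd_diff coprime_commute coprime_dvd_mult_right_iff)
  then show thesis by (rule that)
qed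

lemma nat_ceiling_close:
  fixes x y :: real
  assumes "0 \<le> x" "x - 1 < y" "y \<le> x"
  shows "\<bar>real (nat \<lceil>y\<rceil>) - x\<bar> \<le> 1"
proof (cases "\<lceil>y\<rceil> \<ge> 0")
  case True
  then have "real (nat \<lceil>y\<rceil>) = of_int \<lceil>y\<rceil>"
    by simp
  with assms ceiling_correct[of y] show ?thesis
    unfolding abs_le_iff by linarith
next
  case False
  with assms show ?thesis
    by simp
qed

lemma residue_class_in_interval_iff:
  fixes a x0 :: int and p L :: nat
  assumes p: "p > 0" and x0: "a \<le> x0" "x0 < a + int p"
  defines "y \<equiv> real_of_int (a + int L - x0) / real p"
  shows "x \<in> {a..<a + int L} \<and> [x = x0] (mod int p) \<longleftrightarrow> (\<exists>s < nat \<lceil>y\<rceil>. x = x0 + int p * int s)"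
proof -
  have below_y: "int p * s < a + int L - x0 \<longleftrightarrow> real_of_int s < y" for s
  proof -
    have "int p * s < a + int L - x0 \<longleftrightarrow> real p * real_of_int s < real_of_int (a + int L - x0)"
      by (metis of_int_less_iff of_int_mult of_int_of_nat_eq)
    also have "\<dots> \<longleftrightarrow> real_of_int s < y"
      using p by (simp add: y_def pos_less_divide_eq mult.commute)
    finally show ?thesis .
  qed
  show ?thesis
  proof
    assume x: "x \<in> {a..<a + int L} \<and> [x = x0] (mod int p)"
    then have "[x0 = x] (mod int p)"
      by (simp add: cong_sym_eq)
    then obtain k where k: "x = x0 + int p * k"
      by (auto simp: cong_iff_lin)
    have "k \<ge> 0"
    proof (rule ccontr)
      assume "\<not> k \<ge> 0"
      then have "int p * k \<le> - int p"
        using p mult_left_mono[of k "-1" "int p"] by simp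
      then show False using k x x0 by auto
    qed
    moreover have "real_of_int k < y"
      using k x below_y[of k] by simp
    ultimately show "\<exists>s < nat \<lceil>y\<rceil>. x = x0 + int p * int s"
      using k by (intro exI[of _ "nat k"]) (auto simp: less_ceiling_iff)
  next
    assume "\<exists>s < nat \<lceil>y\<rceil>. x = x0 + int p * int s"
    then obtain s where s: "s < nat \<lceil>y\<rceil>" "x = x0 + int p * int s" by blast
    then have "int s < \<lceil>y\<rceil>"
      by (simp add: zless_nat_eq_int_zless)
    then have "int p * int s < a + int L - x0"
      using below_y[of "int s"] by (simp add: less_ceiling_iff)
    moreover have "[x = x0] (mod int p)"
      using s(2) by (simp add: cong_def)
    moreover have "a \<le> x"
      using s(2) x0(1) by (simp add: add_increasing2)
    ultimately show "x \<in> {a..<a + int L} \<and> [x = x0] (mod int p)"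
      using s(2) by auto
  qed
qed

lemma cong_in_interval_eq_progression:
  fixes a r :: int and p L :: nat
  assumes p: "p > 0"
  obtains M x1 where "\<And>x. x \<in> {a..<a + int L} \<and> [x = r] (mod int p) \<longleftrightarrow> (\<exists>s<M. x = x1 + int p * int s)"
    and "\<bar>real M - real L / real p\<bar> \<le> 1"
proof
  define x1 where "x1 = a + (r - a) mod int p"
  define y where "y = real_of_int (a + int L - x1) / real p"
  have x1: "a \<le> x1" "x1 < a + int p" "[x1 = r] (mod int p)"
    using p by (auto simp: x1_def cong_def mod_add_right_eq)
  have "[x = r] (mod int p) \<longleftrightarrow> [x = x1] (mod int p)" for x
    using x1(3) cong_sym cong_trans by blast
  then show "x \<in> {a..<a + int L} \<and> [x = r] (mod int p) \<longleftrightarrow> (\<exists>s < nat \<lceil>y\<rceil>. x = x1 + int p * int s)" for x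
    using residue_class_in_interval_iff[OF p x1(1,2), of x L] unfolding y_def by simp
  have "int L - int p < a + int L - x1" "a + int L - x1 \<le> int L"
    using x1 by auto
  then have "real L - real p < real_of_int (a + int L - x1)" "real_of_int (a + int L - x1) \<le> real L"
    by (metis of_int_less_iff of_int_diff of_int_of_nat_eq, metis of_int_le_iff of_int_of_nat_eq)
  then have "(real L - real p) / real p < y" "y \<le> real L / real p"
    unfolding y_def using p by (auto intro: divide_strict_right_mono divide_right_mono)
  then show "\<bar>real (nat \<lceil>y\<rceil>) - real L / real p\<bar> \<le> 1"
    using p by (intro nat_ceiling_close) (auto simp: diff_divide_distrib)
qed

lemma dvd_linear_in_interval_eq_progression:
  fixes c e a :: int and p L :: nat
  assumes "p > 0" "coprime c (int p)"
  obtains M x1 where "\<And>x. x \<in> {a..<a + int L} \<and> int p dvd c * x + e \<longleftrightarrow> (\<exists>s<M. x = x1 + int p * int s)"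
    and "\<bar>real M - real L / real p\<bar> \<le> 1"
proof -
  obtain r where r: "\<And>x. int p dvd c * x + e \<longleftrightarrow> [x = r] (mod int p)"
    using dvd_linear_iff_cong[OF assms(2)] by blast
  obtain x1 M where "\<And>x. x \<in> {a..<a + int L} \<and> [x = r] (mod int p) \<longleftrightarrow> (\<exists>s<M. x = x1 + int p * int s)"
    and "\<bar>real M - real L / real p\<bar> \<le> 1"
    using cong_in_interval_eq_progression[OF assms(1), where a = a and L = L and r = r] by blast
  with r show thesis
    using that[of M x1] by simp
qed

lemma sieve_density_nonneg: "0 \<le> sieve_density P"
  and sieve_density_le_one: "sieve_density P \<le> 1"
proof -
  have factor: "0 \<le> 1 - 1 / (real p)\<^sup>2 \<and> 1 - 1 / (real p)\<^sup>2 \<le> 1" for p :: nat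
    by (cases "p = 0") (auto simp: power_le_one_iff)
  show "0 \<le> sieve_density P" "sieve_density P \<le> 1"
    unfolding sieve_density_def using factor by (auto intro: prod_nonneg prod_le_1)
qed

lemma sieve_density_insert:
  "finite P \<Longrightarrow> p \<notin> P \<Longrightarrow> sieve_density (insert p P) = (1 - 1 / (real p)\<^sup>2) * sieve_density P"
  by (simp add: sieve_density_def)

text \<open>The arithmetic of one sieving step: f counts a rectangle, g the part of it removed by a
  new prime p, which is again a rectangle of side lengths about L1/p and L2/p.\<close>
lemma sieve_step_error:
  fixes f g \<rho> L1 L2 M1 M2 p T :: real
  assumes f: "\<bar>f - L1 * L2 * \<rho>\<bar> \<le> T * (L1 + L2 + 4)"
    and g: "\<bar>g - M1 * M2 * \<rho>\<bar> \<le> T * (M1 + M2 + 4)"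
    and M: "\<bar>M1 - L1 / p\<bar> \<le> 1" "\<bar>M2 - L2 / p\<bar> \<le> 1" "0 \<le> M2"
    and "p \<ge> 2" "0 \<le> \<rho>" "\<rho> \<le> 1" "T \<ge> 1" "L1 \<ge> 0" "L2 \<ge> 0"
  shows "\<bar>(f - g) - L1 * L2 * ((1 - 1 / p\<^sup>2) * \<rho>)\<bar> \<le> 3 * T * (L1 + L2 + 4)"
proof -
  have "L1 / p \<le> L1 / 2" "L2 / p \<le> L2 / 2"
    using assms by (intro divide_left_mono; simp)+
  then have M_le: "M1 \<le> L1 / 2 + 1" "M2 \<le> L2 / 2 + 1"
    using M by (auto simp: abs_le_iff)
  have "\<bar>(M1 - L1 / p) * M2\<bar> \<le> M2"
    using assms by (simp add: abs_mult mult_left_le_one_le)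
  moreover have "\<bar>L1 / p * (M2 - L2 / p)\<bar> = L1 / p * \<bar>M2 - L2 / p\<bar>"
    using assms by (simp add: abs_mult)
  moreover have "L1 / p * \<bar>M2 - L2 / p\<bar> \<le> L1 / p"
    using assms by (intro mult_right_le_one_le) auto
  moreover have "M1 * M2 - L1 * L2 / p\<^sup>2 = (M1 - L1 / p) * M2 + L1 / p * (M2 - L2 / p)"
    using assms by (simp add: algebra_simps power2_eq_square)
  ultimately have "\<bar>M1 * M2 - L1 * L2 / p\<^sup>2\<bar> \<le> L1 / 2 + L2 / 2 + 1"
    using M_le \<open>L1 / p \<le> L1 / 2\<close> abs_triangle_ineq[of "(M1 - L1 / p) * M2" "L1 / p * (M2 - L2 / p)"]
    by linarith
  also have "\<dots> \<le> T * (L1 / 2 + L2 / 2 + 1)"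
    using assms by simp
  finally have "\<bar>\<rho> * (M1 * M2 - L1 * L2 / p\<^sup>2)\<bar> \<le> T * (L1 / 2 + L2 / 2 + 1)"
    using assms by (simp add: abs_mult) (meson abs_ge_zero mult_left_le_one_le order_trans)
  moreover have "T * (M1 + M2 + 4) \<le> T * (L1 / 2 + L2 / 2 + 6)"
    using M_le assms by (intro mult_left_mono) auto
  moreover have "T * (L1 + L2 + 4) + T * (L1 / 2 + L2 / 2 + 6) + T * (L1 / 2 + L2 / 2 + 1) \<le> 3 * T * (L1 + L2 + 4)"
    using assms by (simp add: algebra_simps)
  moreover have "\<bar>(f - g) - L1 * L2 * ((1 - 1 / p\<^sup>2) * \<rho>)\<bar>
      = \<bar>(f - L1 * L2 * \<rho>) - (g - M1 * M2 * \<rho>) - \<rho> * (M1 * M2 - L1 * L2 / p\<^sup>2)\<bar>"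
    by (simp add: algebra_simps power2_eq_square)
  moreover have "\<dots> \<le> \<bar>f - L1 * L2 * \<rho>\<bar> + \<bar>g - M1 * M2 * \<rho>\<bar> + \<bar>\<rho> * (M1 * M2 - L1 * L2 / p\<^sup>2)\<bar>"
    using abs_triangle_ineq4[of "f - L1 * L2 * \<rho> - (g - M1 * M2 * \<rho>)" "\<rho> * (M1 * M2 - L1 * L2 / p\<^sup>2)"]
      abs_triangle_ineq4[of "f - L1 * L2 * \<rho>" "g - M1 * M2 * \<rho>"] by linarith
  ultimately show ?thesis
    using f g by linarith
qed

text \<open>In each coordinate the points removed by p form an arithmetic progression of difference p.\<close>
lemma card_sieve_set_int_rect_removed:
  fixes p :: nat
  assumes "p > 0"
    and x1: "\<And>x. x \<in> {a1..<a1 + int L1} \<and> int p dvd c p * x + e1 p \<longleftrightarrow> (\<exists>s<M1. x = x1 + int p * int s)"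
    and x2: "\<And>x. x \<in> {a2..<a2 + int L2} \<and> int p dvd c p * x + e2 p \<longleftrightarrow> (\<exists>s<M2. x = x2 + int p * int s)"
  shows "card {t \<in> sieve_set P c e1 e2 \<inter> int_rect a1 a2 L1 L2.
      int p dvd c p * fst t + e1 p \<and> int p dvd c p * snd t + e2 p}
    = card (sieve_set P (\<lambda>p'. c p' * int p) (\<lambda>p'. c p' * x1 + e1 p') (\<lambda>p'. c p' * x2 + e2 p')
        \<inter> int_rect 0 0 M1 M2)"
    (is "card ?X = card ?F'")
proof -
  define h where "h = (\<lambda>s::int \<times> int. (x1 + int p * fst s, x2 + int p * snd s))"
  have "?X = h ` ?F'"
  proof (intro equalityI subsetI)
    fix t assume "t \<in> ?X"
    then obtain s1 s2 where "s1 < M1" "fst t = x1 + int p * int s1" "s2 < M2" "snd t = x2 + int p * int s2"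
      using x1 x2 by (simp add: int_rect_def mem_Times_iff) metis
    with \<open>t \<in> ?X\<close> show "t \<in> h ` ?F'"
      by (intro image_eqI[of _ _ "(int s1, int s2)"])
        (auto simp: h_def sieve_set_def int_rect_def algebra_simps prod_eq_iff)
  next
    fix t assume "t \<in> h ` ?F'"
    then obtain s1 s2 where s: "(s1, s2) \<in> ?F'" "t = h (s1, s2)" by auto
    then obtain n1 n2 where "s1 = int n1" "n1 < M1" "s2 = int n2" "n2 < M2"
      by (auto simp: int_rect_def) (metis nonneg_int_cases of_nat_less_iff)
    with x1[of "fst t"] x2[of "snd t"] s show "t \<in> ?X"
      by (auto simp: h_def sieve_set_def int_rect_def algebra_simps)
  qed
  moreover have "inj_on h ?F'"
    using assms(1) by (intro inj_onI) (auto simp: h_def prod_eq_iff)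
  ultimately show ?thesis
    by (simp add: card_image)
qed

lemma card_sieve_set_int_rect:
  assumes "finite P" and "\<And>p. p \<in> P \<Longrightarrow> prime p" and "\<And>p. p \<in> P \<Longrightarrow> coprime (c p) (int p)"
  shows "\<bar>real (card (sieve_set P c e1 e2 \<inter> int_rect a1 a2 L1 L2)) - real L1 * real L2 * sieve_density P\<bar>
    \<le> 3 ^ card P * (real L1 + real L2 + 4)"
  using assms
proof (induction P arbitrary: c e1 e2 a1 a2 L1 L2 rule: finite_induct)
  case empty
  then show ?case by (simp add: sieve_set_def sieve_density_def)
next
  case (insert p P)
  have p: "prime p" "p > 0" "real p \<ge> 2"
    using "insert.prems"(1) prime_gt_0_nat prime_ge_2_nat by auto
  have cop: "coprime (c p) (int p)"
    using "insert.prems"(2) by simp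
  obtain x1 M1 where x1: "\<And>x. x \<in> {a1..<a1 + int L1} \<and> int p dvd c p * x + e1 p \<longleftrightarrow> (\<exists>s<M1. x = x1 + int p * int s)"
    and M1: "\<bar>real M1 - real L1 / real p\<bar> \<le> 1"
    using dvd_linear_in_interval_eq_progression[OF p(2) cop, where a = a1 and L = L1 and e = "e1 p"] by blast
  obtain x2 M2 where x2: "\<And>x. x \<in> {a2..<a2 + int L2} \<and> int p dvd c p * x + e2 p \<longleftrightarrow> (\<exists>s<M2. x = x2 + int p * int s)"
    and M2: "\<bar>real M2 - real L2 / real p\<bar> \<le> 1"
    using dvd_linear_in_interval_eq_progression[OF p(2) cop, where a = a2 and L = L2 and e = "e2 p"] by blast
  define F where "F = sieve_set P c e1 e2 \<inter> int_rect a1 a2 L1 L2"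
  define X where "X = {t \<in> F. int p dvd c p * fst t + e1 p \<and> int p dvd c p * snd t + e2 p}"
  define F' where "F' = sieve_set P (\<lambda>p'. c p' * int p) (\<lambda>p'. c p' * x1 + e1 p') (\<lambda>p'. c p' * x2 + e2 p')
    \<inter> int_rect 0 0 M1 M2"
  have card_X: "card X = card F'"
    unfolding X_def F_def F'_def using p(2) x1 x2 by (rule card_sieve_set_int_rect_removed)
  have XF: "X \<subseteq> F" "finite F"
    by (auto simp: X_def F_def)
  have "sieve_set (insert p P) c e1 e2 \<inter> int_rect a1 a2 L1 L2 = F - X"
    by (auto simp: F_def X_def sieve_set_def)
  then have card_new: "card (sieve_set (insert p P) c e1 e2 \<inter> int_rect a1 a2 L1 L2) = card F - card F'"
    using XF by (simp add: card_Diff_subset finite_subset flip: card_X)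
  have "card F' \<le> card F"
    using XF by (simp add: card_mono flip: card_X)
  have coprime_P: "coprime (c p') (int p')" "coprime (c p' * int p) (int p')" if "p' \<in> P" for p'
  proof -
    have "coprime p p'"
      using that "insert.hyps"(2) "insert.prems"(1) p(1) by (metis insertCI primes_coprime)
    then show "coprime (c p') (int p')" "coprime (c p' * int p) (int p')"
      using that "insert.prems"(2) by auto
  qed
  have IH_F: "\<bar>real (card F) - real L1 * real L2 * sieve_density P\<bar> \<le> 3 ^ card P * (real L1 + real L2 + 4)"
    unfolding F_def using "insert.IH" "insert.prems" coprime_P by blast
  have IH_F': "\<bar>real (card F') - real M1 * real M2 * sieve_density P\<bar> \<le> 3 ^ card P * (real M1 + real M2 + 4)"
    unfolding F'_def using "insert.IH"[of "\<lambda>p'. c p' * int p"] "insert.prems" coprime_P by blast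
  show ?case
    using sieve_step_error[OF IH_F IH_F' M1 M2 _ p(3) sieve_density_nonneg sieve_density_le_one]
      \<open>card F' \<le> card F\<close> "insert.hyps"
    by (simp add: card_new sieve_density_insert of_nat_diff)
qed

lemma card_pairwise_cong_in_interval:
  fixes p q :: nat and a :: int and S :: "int set"
  assumes "p > 0" "p dvd q" and S: "S \<subseteq> {a..<a + int q}"
    and cong: "\<And>x y. x \<in> S \<Longrightarrow> y \<in> S \<Longrightarrow> [x = y] (mod int p)"
  shows "card S \<le> q div p"
proof -
  define f where "f = (\<lambda>x. nat ((x - a) div int p))"
  have inj: "inj_on f S"
  proof (rule inj_onI)
    fix x y assume xy: "x \<in> S" "y \<in> S" "f x = f y"
    moreover have "0 \<le> (x - a) div int p" "0 \<le> (y - a) div int p"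
      using xy S assms(1) by (auto simp: pos_imp_zdiv_nonneg_iff)
    ultimately have "(x - a) div int p = (y - a) div int p"
      by (simp add: f_def)
    moreover have "(x - a) mod int p = (y - a) mod int p"
      using cong[OF xy(1,2)] by (intro mod_diff_cong) (simp_all add: cong_def)
    ultimately have "(x - a) div int p * int p + (x - a) mod int p
        = (y - a) div int p * int p + (y - a) mod int p"
      by simp
    then show "x = y"
      by simp
  qed
  have img: "f ` S \<subseteq> {..<q div p}"
  proof
    fix z assume "z \<in> f ` S"
    then obtain x where x: "x \<in> S" "z = f x" by auto
    have "int p * int (q div p) = int q"
      using assms(2) by (simp flip: of_nat_mult)
    then have "x - a < int p * int (q div p)"
      using x S by auto
    moreover have "(x - a) div int p * int p \<le> x - a"
      using pos_mod_sign[of "int p" "x - a"] minus_mod_eq_div_mult[of "x - a" "int p"] assms(1) by linarith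
    ultimately have "(x - a) div int p * int p < int (q div p) * int p"
      by (simp add: mult.commute)
    then have "(x - a) div int p < int (q div p)"
      by (rule mult_right_less_imp_less) simp
    moreover have "0 \<le> (x - a) div int p"
      using x S assms(1) by (auto simp: pos_imp_zdiv_nonneg_iff)
    ultimately show "z \<in> {..<q div p}"
      using x by (simp add: f_def nat_less_iff)
  qed
  show ?thesis
    using card_image[OF inj] card_mono[OF finite_lessThan img] by simp
qed

lemma sum_inverse_squares_le:
  assumes "finite P" "\<And>p. p \<in> P \<Longrightarrow> p \<ge> 2"
  shows "(\<Sum>p\<in>P. 1 / (real p)\<^sup>2) \<le> 3/4"
proof -
  have telescope: "(\<Sum>n\<in>{2..N}. 1 / (real n)\<^sup>2) \<le> 3/4 - 1 / real N" if "N \<ge> 2" for N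
    using that
  proof (induction N rule: nat_induct_at_least)
    case base
    then show ?case by (simp add: numeral_2_eq_2)
  next
    case (Suc n)
    have "1 / (real (Suc n))\<^sup>2 \<le> 1 / (real n * real (Suc n))"
      using Suc by (intro divide_left_mono) (auto simp: power2_eq_square)
    also have "\<dots> = 1 / real n - 1 / real (Suc n)"
      using Suc by (simp add: field_simps)
    finally show ?case
      using Suc by (simp add: atLeastAtMostSuc_conv)
  qed
  show ?thesis
  proof (cases "P = {}")
    case False
    have "(\<Sum>p\<in>P. 1 / (real p)\<^sup>2) \<le> (\<Sum>n\<in>{2..Max P}. 1 / (real n)\<^sup>2)"
      using assms by (intro sum_mono2) auto
    also have "\<dots> \<le> 3/4 - 1 / real (Max P)"
      using assms(2)[OF Max_in[OF assms(1) False]] by (rule telescope)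
    finally show ?thesis
      by (smt (verit) of_nat_0_le_iff divide_nonneg_nonneg)
  qed simp
qed

lemma sieve_density_ge:
  assumes "finite P" "\<And>p. p \<in> P \<Longrightarrow> p \<ge> 2"
  shows "sieve_density P \<ge> 1/4"
proof -
  have "1 / (real p)\<^sup>2 \<in> {0..1}" if "p \<in> P" for p
    using assms(2)[OF that] by (simp add: power_le_one_iff)
  then have "1 - (\<Sum>p\<in>P. 1 / (real p)\<^sup>2) \<le> sieve_density P"
    unfolding sieve_density_def by (rule Weierstrass_prod_ineq)
  with sum_inverse_squares_le[OF assms] show ?thesis by linarith
qed

lemma finite_prime_divisors: "q > 0 \<Longrightarrow> finite {p. prime p \<and> p dvd (q::nat)}"
  by (rule finite_subset[of _ "{..q}"]) (auto dest: dvd_imp_le)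

text \<open>Each prime p removes at most (q/p)^2 points and the sum of 1/p^2 is below 3/4; unlike
  card_sieve_set_int_rect, this has no error term and so is useful for all q.\<close>
lemma card_sieve_set_square_ge:
  assumes "q > 0" "P \<subseteq> {p. prime p \<and> p dvd q}" "\<And>p. p \<in> P \<Longrightarrow> coprime (c p) (int p)"
  shows "real q ^ 2 / 4 \<le> card (sieve_set P c e1 e2 \<inter> int_rect a1 a2 q q)"
proof -
  let ?R = "int_rect a1 a2 q q"
  define Y where "Y = (\<lambda>p. {x \<in> {a1..<a1 + int q}. int p dvd c p * x + e1 p} \<times>
                           {x \<in> {a2..<a2 + int q}. int p dvd c p * x + e2 p})"
  have P: "finite P" "\<And>p. p \<in> P \<Longrightarrow> p \<ge> 2"
    using assms finite_subset[OF _ finite_prime_divisors] prime_ge_2_nat by auto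
  have finite_Y: "finite (Y p)" for p
    unfolding Y_def by (intro finite_cartesian_product finite_subset[OF _ finite_atLeastLessThan_int]) auto
  have card_Y: "real (card (Y p)) \<le> real q ^ 2 * (1 / (real p)\<^sup>2)" if p: "p \<in> P" for p
  proof -
    have "prime p" "p dvd q"
      using assms(2) p by auto
    have cong: "[x = y] (mod int p)" if "int p dvd c p * x + e" "int p dvd c p * y + e" for x y e
    proof -
      have "int p dvd c p * (x - y)"
        using dvd_diff[OF that] by (simp add: algebra_simps)
      then show ?thesis
        using assms(3)[OF p] by (simp add: cong_iff_dvd_diff coprime_commute coprime_dvd_mult_right_iff)
    qed
    have "card (Y p) \<le> (q div p) * (q div p)"
      unfolding Y_def card_cartesian_product using \<open>prime p\<close> \<open>p dvd q\<close>
      by (intro mult_mono card_pairwise_cong_in_interval) (auto intro: cong prime_gt_0_nat)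
    also have "real \<dots> = real q ^ 2 * (1 / (real p)\<^sup>2)"
      using \<open>p dvd q\<close> by (simp add: real_of_nat_div power_divide power2_eq_square)
    finally show ?thesis by simp
  qed
  have "?R - sieve_set P c e1 e2 \<subseteq> (\<Union>p\<in>P. Y p)"
    by (auto simp: sieve_set_def Y_def int_rect_def)
  then have "card (?R - sieve_set P c e1 e2) \<le> (\<Sum>p\<in>P. card (Y p))"
    using P finite_Y by (intro order.trans[OF card_mono card_UN_le]) auto
  then have "real (card (?R - sieve_set P c e1 e2)) \<le> (\<Sum>p\<in>P. real (card (Y p)))"
    by (metis of_nat_le_iff of_nat_sum)
  also have "\<dots> \<le> (\<Sum>p\<in>P. real q ^ 2 * (1 / (real p)\<^sup>2))"
    using card_Y by (rule sum_mono)
  also have "\<dots> \<le> real q ^ 2 * (3/4)"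
    unfolding sum_distrib_left[symmetric] using sum_inverse_squares_le[OF P] by (intro mult_left_mono) auto
  finally have "real (card (?R - sieve_set P c e1 e2)) \<le> real q ^ 2 * (3/4)" .
  moreover have "card (?R - sieve_set P c e1 e2) + card (sieve_set P c e1 e2 \<inter> ?R) = q * q"
    using card_Int_Diff[OF finite_int_rect, of a1 a2 q q "sieve_set P c e1 e2"] by (simp add: Int_commute)
  then have "real (card (?R - sieve_set P c e1 e2)) + real (card (sieve_set P c e1 e2 \<inter> ?R)) = real q ^ 2"
    by (metis of_nat_add of_nat_mult power2_eq_square)
  ultimately show ?thesis
    by linarith
qed

lemma prod_prime_divisors_le:
  fixes q :: nat
  assumes "q > 0" "P \<subseteq> {p. prime p \<and> p dvd q}"
  shows "(\<Prod>p\<in>P. p) \<le> q"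
proof -
  have "\<Prod>P dvd \<Prod>(prime_factors q)"
    using assms by (intro prod_dvd_prod_subset) (auto simp: prime_factors_dvd)
  also have "\<dots> dvd (\<Prod>p\<in>prime_factors q. p ^ multiplicity p q)"
    by (intro prod_dvd_prod dvd_power disjI1) (simp add: prime_factors_multiplicity)
  also have "\<dots> = q"
    using assms(1) by (simp add: prod_prime_factors)
  finally show ?thesis
    using assms(1) by (rule dvd_imp_le)
qed

lemma three_pow_card_prime_divisors_le:
  assumes "q > 0" "P \<subseteq> {p. prime p \<and> p dvd q}"
  shows "(3::real) ^ card P \<le> 3 ^ 9 * sqrt (real q)"
proof -
  have finP: "finite P"
    using assms finite_subset[OF _ finite_prime_divisors] by blast
  let ?S = "{p\<in>P. p < 9}" and ?L = "{p\<in>P. \<not> p < 9}"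
  have "P = ?S \<union> ?L"
    by auto
  then have card_P: "card P = card ?S + card ?L"
    using finP by (metis (no_types, lifting) card_Un_disjoint disjoint_iff finite_Un mem_Collect_eq)
  have "card ?S \<le> 9"
    using card_mono[of "{..<9}" ?S] by auto
  have "(9::real) ^ card ?L \<le> (\<Prod>p\<in>?L. real p)"
    using prod_mono[of ?L "\<lambda>_. 9::real" real] by simp
  also have "\<dots> \<le> real q"
  proof -
    have "(\<Prod>p\<in>?L. p) \<le> q"
      using assms by (intro prod_prime_divisors_le) auto
    then have "real (\<Prod>p\<in>?L. p) \<le> real q"
      by (simp only: of_nat_le_iff)
    then show ?thesis
      by simp
  qed
  finally have "(9::real) ^ card ?L \<le> real q" .
  moreover have "(9::real) ^ card ?S \<le> 9 ^ 9"
    using \<open>card ?S \<le> 9\<close> by (intro power_increasing) auto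
  ultimately have "(9::real) ^ card ?S * 9 ^ card ?L \<le> 9 ^ 9 * real q"
    by (intro mult_mono) auto
  moreover have "((3::real) ^ card P)\<^sup>2 = 9 ^ card ?S * 9 ^ card ?L"
  proof -
    have nine: "(9::real) ^ n = (3 ^ n)\<^sup>2" for n
    proof -
      have "(9::real) ^ n = (3 * 3) ^ n"
        by simp
      also have "\<dots> = (3 ^ n)\<^sup>2"
        by (simp only: power_mult_distrib power2_eq_square)
      finally show ?thesis .
    qed
    show ?thesis
      by (simp add: card_P power_add power_mult_distrib nine)
  qed
  ultimately have "((3::real) ^ card P)\<^sup>2 \<le> 9 ^ 9 * real q"
    by simp
  then have "(3::real) ^ card P \<le> sqrt (9 ^ 9 * real q)"
    by (simp add: real_le_rsqrt)
  then show ?thesis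
    by (simp add: real_sqrt_mult)
qed

section \<open>The admissible residues S_q\<close>

lemma gcd3_eq_1_iff:
  fixes D q :: nat and C1 C2 x1 x2 :: int
  assumes "D \<ge> 1" "q \<ge> 1"
    and C: "\<And>p. prime p \<Longrightarrow> p dvd D \<Longrightarrow> \<not> (int p dvd C1 \<and> int p dvd C2)"
  shows "gcd3 (int D * x1 + C1, int D * x2 + C2) (int D * int q) = 1 \<longleftrightarrow>
    (\<forall>p\<in>{p. prime p \<and> p dvd q \<and> \<not> p dvd D}. \<not> (int p dvd int D * x1 + C1 \<and> int p dvd int D * x2 + C2))"
    (is "?g = 1 \<longleftrightarrow> (\<forall>p\<in>?P. \<not> ?dvd p)")
proof
  assume "?g = 1"
  show "\<forall>p\<in>?P. \<not> ?dvd p"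
  proof (intro ballI notI)
    fix p assume p: "p \<in> ?P" and "?dvd p"
    moreover have "int p dvd int D * int q"
      using p by simp
    ultimately have "int p dvd ?g"
      by (simp add: gcd3_def)
    with \<open>?g = 1\<close> p show False
      by (auto simp: prime_ge_2_nat)
  qed
next
  assume none: "\<forall>p\<in>?P. \<not> ?dvd p"
  show "?g = 1"
  proof (rule ccontr)
    assume "?g \<noteq> 1"
    moreover have "?g \<noteq> 0" "?g \<ge> 0"
      using assms(1,2) by (auto simp: gcd3_def)
    ultimately obtain b where b: "b dvd ?g" "prime b"
      using prime_divisor_exists[of ?g] by auto
    define p where "p = nat b"
    have "prime p" "b = int p"
      using b(2) by (auto simp: p_def prime_ge_0_int)
    then have dvd: "?dvd p" "int p dvd int D * int q"
      using b(1) by (auto simp: gcd3_def intro: dvd_trans)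
    show False
    proof (cases "p dvd D")
      case True
      then have "int p dvd C1" "int p dvd C2"
        using dvd(1) by (auto simp: dvd_add_right_iff)
      with C[OF \<open>prime p\<close> True] show False by blast
    next
      case False
      then have "p dvd q"
        using dvd(2) \<open>prime p\<close> by (simp add: prime_dvd_mult_iff)
      with False none dvd(1) \<open>prime p\<close> show False by blast
    qed
  qed
qed

lemma approx_cancel_common_factor:
  fixes p B :: nat and A1 A2 :: int
  assumes "p > 0" "p dvd B" "int p dvd A1" "int p dvd A2"
  shows "approx \<gamma> (A1 div int p, A2 div int p) (B div p) = approx \<gamma> (A1, A2) B"
proof -
  obtain B' a1 a2 where "B = p * B'" "A1 = int p * a1" "A2 = int p * a2"
    using assms(2-4) by (elim dvdE)
  with assms(1) show ?thesis
    by (simp add: approx_def)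
qed

definition dist_to_int :: "real \<Rightarrow> real" where
  "dist_to_int x = \<bar>x - of_int (round x)\<bar>"

lemma dist_to_int_le: "dist_to_int x \<le> \<bar>x - of_int m\<bar>"
  unfolding dist_to_int_def by (rule round_diff_minimal)

lemma dist_to_int_le_half: "dist_to_int x \<le> 1/2"
  using of_int_round_ge[of x] of_int_round_le[of x] unfolding dist_to_int_def by linarith

lemma approx_round:
  assumes "b \<ge> 1"
  shows "approx \<gamma> (round (b * fst \<gamma>), round (b * snd \<gamma>)) b
    = max (dist_to_int (b * fst \<gamma>)) (dist_to_int (b * snd \<gamma>)) / b"
proof -
  have "\<bar>x - of_int r / real b\<bar> = \<bar>b * x - of_int r\<bar> / b" for x :: real and r :: int
  proof -
    have "x - of_int r / real b = (b * x - of_int r) / b"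
      using assms by (simp add: field_simps)
    then show ?thesis by simp
  qed
  then show ?thesis
    by (simp add: approx_def maxnorm_def dist_to_int_def max_divide_distrib_right)
qed

lemma BB_ge_1: "1 \<le> BB \<gamma> k"
  and BB_le: "1 \<le> B \<Longrightarrow> approx \<gamma> A B < 1 / 2 ^ k \<Longrightarrow> BB \<gamma> k \<le> B"
proof -
  define B0 :: nat where "B0 = 2 ^ k"
  have "B0 \<ge> 1"
    by (simp add: B0_def)
  have "max (dist_to_int (B0 * fst \<gamma>)) (dist_to_int (B0 * snd \<gamma>)) / B0 \<le> (1/2) / B0"
    using dist_to_int_le_half[of "B0 * fst \<gamma>"] dist_to_int_le_half[of "B0 * snd \<gamma>"]
    by (intro divide_right_mono) auto
  also have "\<dots> < 1 / 2 ^ k"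
    by (simp add: B0_def divide_strict_left_mono)
  finally have "approx \<gamma> (round (B0 * fst \<gamma>), round (B0 * snd \<gamma>)) B0 < 1 / 2 ^ k"
    by (simp add: approx_round[OF \<open>B0 \<ge> 1\<close>])
  with \<open>B0 \<ge> 1\<close> have "1 \<le> B0 \<and> (\<exists>A. approx \<gamma> A B0 < 1 / 2 ^ k)"
    by blast
  then show "1 \<le> BB \<gamma> k"
    unfolding BB_def by (rule LeastI2_ex[OF exI]) simp
  show "1 \<le> B \<Longrightarrow> approx \<gamma> A B < 1 / 2 ^ k \<Longrightarrow> BB \<gamma> k \<le> B"
    unfolding BB_def by (rule Least_le) blast
qed

text \<open>By minimality of the denominator BB, a common prime factor could be cancelled.\<close>
lemma BB_no_common_prime:
  assumes "approx \<gamma> A (BB \<gamma> k) < 1 / 2 ^ k" "prime p" "p dvd BB \<gamma> k"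
  shows "\<not> (int p dvd fst A \<and> int p dvd snd A)"
proof
  assume A: "int p dvd fst A \<and> int p dvd snd A"
  have "p \<ge> 2"
    using assms(2) prime_ge_2_nat by blast
  obtain m where m: "BB \<gamma> k = p * m"
    using assms(3) by (elim dvdE)
  with BB_ge_1[of \<gamma> k] have "m \<ge> 1"
    by (cases m) auto
  with m \<open>p \<ge> 2\<close> have "1 \<le> BB \<gamma> k div p" "BB \<gamma> k div p < BB \<gamma> k"
    by auto
  moreover have "approx \<gamma> (fst A div int p, snd A div int p) (BB \<gamma> k div p) < 1 / 2 ^ k"
    using approx_cancel_common_factor[of p "BB \<gamma> k" "fst A" "snd A" \<gamma>] assms A \<open>p \<ge> 2\<close> by simp
  ultimately show False
    using BB_le by fastforce
qed

definition arc_points :: "nat \<Rightarrow> real \<Rightarrow> real \<Rightarrow> nat set" where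
  "arc_points K x t = {g \<in> {..<K}. \<exists>m::int. 0 \<le> g / K - x - m \<and> g / K - x - m < t}"

lemma shifted_grid_point_in_arc_points:
  assumes K: "K \<ge> 1" and s: "1 + real s \<le> t * K"
  shows "nat ((\<lceil>K * x\<rceil> + int s) mod int K) \<in> arc_points K x t"
proof -
  define c where "c = \<lceil>K * x\<rceil>"
  define g where "g = nat ((c + int s) mod int K)"
  define m where "m = - ((c + int s) div int K)"
  have g_mod: "int g = (c + int s) mod int K"
    using K by (simp add: g_def)
  have "int g < int K"
    using g_mod K by simp
  then have g: "int g = c + int s + int K * m" "g < K"
    using g_mod div_mult_mod_eq[of "c + int s" "int K"] by (simp_all add: m_def algebra_simps)
  then have "real g = of_int c + real s + real K * of_int m"
    using arg_cong[OF g(1), of real_of_int] by simp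
  then have "real g / K - x - m = (c - K * x) / K + s / K"
    using K by (simp add: field_simps)
  moreover have "0 \<le> c - K * x" "c - K * x < 1"
    unfolding c_def by linarith+
  ultimately have "0 \<le> real g / K - x - m" "real g / K - x - m < t"
    using K s by (auto simp: field_simps)
  with g(2) show ?thesis
    by (auto simp: arc_points_def g_def c_def)
qed

lemma card_arc_points_ge:
  assumes K: "K \<ge> 1" and t: "0 \<le> t" "t \<le> 1"
  shows "nat \<lfloor>t * K\<rfloor> \<le> card (arc_points K x t)"
proof -
  define n where "n = nat \<lfloor>t * K\<rfloor>"
  define f where "f = (\<lambda>s::nat. nat ((\<lceil>K * x\<rceil> + int s) mod int K))"
  have "t * K \<le> K"
    using t by (simp add: mult_left_le_one_le)
  then have "\<lfloor>t * K\<rfloor> \<le> int K"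
    by linarith
  then have "n \<le> K"
    by (simp add: n_def nat_le_iff)
  have "real n \<le> t * K"
    using t by (simp add: n_def)
  have inj: "inj_on f {..<n}"
  proof (rule inj_onI)
    fix s s' assume "s \<in> {..<n}" "s' \<in> {..<n}" "f s = f s'"
    then have "[\<lceil>K * x\<rceil> + int s = \<lceil>K * x\<rceil> + int s'] (mod int K)" "s < K" "s' < K"
      using K \<open>n \<le> K\<close> by (auto simp: f_def cong_def nat_eq_iff2)
    then have "[s = s'] (mod K)"
      by (simp add: cong_add_lcancel cong_int_iff)
    with \<open>s < K\<close> \<open>s' < K\<close> show "s = s'"
      by (simp add: cong_def)
  qed
  have "f ` {..<n} \<subseteq> arc_points K x t"
    using \<open>real n \<le> t * K\<close> by (auto simp: f_def intro!: shifted_grid_point_in_arc_points[OF K])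
  moreover have "finite (arc_points K x t)"
    by (simp add: arc_points_def)
  ultimately show ?thesis
    using card_image[OF inj] card_mono[of "arc_points K x t" "f ` {..<n}"] by (simp add: n_def)
qed

lemma arc_points_common_imp_close:
  assumes "h \<in> arc_points K (i * y) t" "h \<in> arc_points K (j * y) t" "i < j"
  shows "dist_to_int (real (j - i) * y) < t"
proof -
  obtain m m' :: int where
    "0 \<le> real h / K - i * y - m" "real h / K - i * y - m < t"
    "0 \<le> real h / K - j * y - m'" "real h / K - j * y - m' < t"
    using assms(1,2) unfolding arc_points_def by blast
  moreover have "real (j - i) * y - of_int (m - m') = (real h / K - i * y - m) - (real h / K - j * y - m')"
    using assms(3) by (simp add: of_nat_diff algebra_simps)
  ultimately have "\<bar>real (j - i) * y - of_int (m - m')\<bar> < t"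
    by linarith
  with dist_to_int_le show ?thesis
    by (rule le_less_trans)
qed

lemma grid_size_exists:
  fixes t :: real and N :: nat
  assumes "N \<ge> 1" "1 / sqrt N < t"
  obtains K :: nat where "K \<ge> 1" "K\<^sup>2 < N * (nat \<lfloor>t * K\<rfloor>)\<^sup>2"
proof -
  have sN: "sqrt N > 0"
    using assms(1) by simp
  define \<epsilon> where "\<epsilon> = sqrt N * t - 1"
  have "\<epsilon> > 0"
    using assms(2) sN by (simp add: \<epsilon>_def field_simps)
  define K where "K = nat \<lceil>sqrt N / \<epsilon>\<rceil> + 1"
  define n where "n = nat \<lfloor>t * K\<rfloor>"
  have "real K > sqrt N / \<epsilon>"
    unfolding K_def by linarith
  then have K: "K \<ge> 1" "K * \<epsilon> > sqrt N"
    using \<open>\<epsilon> > 0\<close> by (auto simp: K_def field_simps)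
  have "real n \<ge> t * K - 1"
    unfolding n_def by linarith
  then have "sqrt N * (t * K - 1) \<le> sqrt N * real n"
    using sN by (intro mult_left_mono) auto
  moreover have "sqrt N * (t * K - 1) = K * \<epsilon> + K - sqrt N"
    by (simp add: \<epsilon>_def algebra_simps)
  ultimately have "real K < sqrt N * real n"
    using K by linarith
  then have "real K ^ 2 < (sqrt N * real n) ^ 2"
    by (intro power_strict_mono) auto
  then have "real (K ^ 2) < real (N * n ^ 2)"
    by (simp add: power_mult_distrib)
  then show thesis
    using that K(1) by (simp only: of_nat_less_iff n_def)
qed

text \<open>Pigeonhole on a K x K grid of the torus: if t exceeds 1/sqrt N, the N squares of side t
  around the points j(g1,g2), j < N, cannot be disjoint.\<close>
lemma close_multiples_pigeonhole:
  fixes g1 g2 t :: real and N :: nat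
  assumes N: "N \<ge> 1" and t: "1 / sqrt N < t" "t \<le> 1"
  shows "\<exists>b. 1 \<le> b \<and> b < N \<and> dist_to_int (b * g1) < t \<and> dist_to_int (b * g2) < t"
proof -
  obtain K :: nat where K: "K \<ge> 1" "K\<^sup>2 < N * (nat \<lfloor>t * K\<rfloor>)\<^sup>2"
    using grid_size_exists[OF N t(1)] by blast
  define n where "n = nat \<lfloor>t * K\<rfloor>"
  define G where "G = (\<lambda>j::nat. arc_points K (j * g1) t \<times> arc_points K (j * g2) t)"
  have G_sub: "G j \<subseteq> {..<K} \<times> {..<K}" for j
    by (auto simp: G_def arc_points_def)
  have "0 < 1 / sqrt N"
    using N by simp
  with t(1) have "0 \<le> t"
    by linarith
  then have "n \<le> card (arc_points K y t)" for y
    unfolding n_def using card_arc_points_ge[OF K(1) _ t(2)] by blast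
  then have card_G: "n ^ 2 \<le> card (G j)" for j
    by (simp add: G_def card_cartesian_product power2_eq_square mult_le_mono)
  have "\<not> disjoint_family_on G {..<N}"
  proof
    assume "disjoint_family_on G {..<N}"
    then have "card (\<Union>j<N. G j) = (\<Sum>j<N. card (G j))"
      by (intro card_UN_disjoint) (auto intro: finite_subset[OF G_sub] simp: disjoint_family_on_def)
    also have "\<dots> \<ge> N * n ^ 2"
      using sum_bounded_below[of "{..<N}" "n ^ 2" "\<lambda>j. card (G j)"] card_G by simp
    finally have "N * n ^ 2 \<le> card (\<Union>j<N. G j)" .
    also have "\<dots> \<le> K ^ 2"
      using card_mono[OF _ UN_least[OF G_sub]] by (simp add: card_cartesian_product power2_eq_square)
    finally show False
      using K(2) by (simp add: n_def)
  qed
  then obtain i0 j0 where "i0 < N" "j0 < N" "i0 \<noteq> j0" "G i0 \<inter> G j0 \<noteq> {}"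
    unfolding disjoint_family_on_def by auto
  then obtain i j where ij: "i < j" "j < N" "G i \<inter> G j \<noteq> {}"
    by (cases "i0 < j0") (auto simp: Int_commute dest: not_less_iff_gr_or_eq[THEN iffD1])
  from ij(3) obtain h1 h2 where "(h1, h2) \<in> G i" "(h1, h2) \<in> G j"
    by auto
  then have "dist_to_int (real (j - i) * g1) < t" "dist_to_int (real (j - i) * g2) < t"
    using arc_points_common_imp_close ij(1) unfolding G_def by auto
  with ij show ?thesis
    by (intro exI[of _ "j - i"]) auto
qed

lemma simultaneous_Dirichlet_strict:
  fixes g1 g2 :: real and N :: nat
  assumes N: "N \<ge> 2"
  shows "\<exists>b. 1 \<le> b \<and> b < N \<and> max (dist_to_int (b * g1)) (dist_to_int (b * g2)) \<le> 1 / sqrt N"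
proof -
  define \<delta> where "\<delta> = (\<lambda>b::nat. max (dist_to_int (b * g1)) (dist_to_int (b * g2)))"
  define t where "t = Min (\<delta> ` {1..<N})"
  have "t \<in> \<delta> ` {1..<N}"
    unfolding t_def using N by (intro Min_in) auto
  then obtain b where b: "b \<in> {1..<N}" "t = \<delta> b"
    by auto
  have b_min: "\<delta> b \<le> \<delta> b'" if "b' \<in> {1..<N}" for b'
    unfolding b(2)[symmetric] t_def using that by (intro Min_le) auto
  have "\<delta> b \<le> 1 / sqrt N"
  proof (rule ccontr)
    assume "\<not> ?thesis"
    moreover have "\<delta> b \<le> 1"
      using dist_to_int_le_half[of "b * g1"] dist_to_int_le_half[of "b * g2"] by (simp add: \<delta>_def)
    ultimately obtain b' where "1 \<le> b'" "b' < N"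
      "dist_to_int (b' * g1) < \<delta> b" "dist_to_int (b' * g2) < \<delta> b"
      using close_multiples_pigeonhole[of N "\<delta> b" g1 g2] N by auto
    then have "\<delta> b' < \<delta> b"
      by (simp add: \<delta>_def)
    with b_min[of b'] \<open>1 \<le> b'\<close> \<open>b' < N\<close> show False
      by simp
  qed
  with b(1) show ?thesis
    by (auto simp: \<delta>_def)
qed

lemma bb_ge_1: "BB \<gamma> k \<ge> 2 \<Longrightarrow> 1 \<le> bb \<gamma> k"
  and bb_less_BB: "BB \<gamma> k \<ge> 2 \<Longrightarrow> bb \<gamma> k < BB \<gamma> k"
  and bb_le: "1 \<le> b \<Longrightarrow> b < BB \<gamma> k \<Longrightarrow> approx \<gamma> a b \<le> 1 / (real b * sqrt (BB \<gamma> k)) \<Longrightarrow> bb \<gamma> k \<le> b"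
proof -
  let ?good = "\<lambda>b. 1 \<le> b \<and> b < BB \<gamma> k \<and> (\<exists>a. approx \<gamma> a b \<le> 1 / (real b * sqrt (BB \<gamma> k)))"
  show "1 \<le> b \<Longrightarrow> b < BB \<gamma> k \<Longrightarrow> approx \<gamma> a b \<le> 1 / (real b * sqrt (BB \<gamma> k)) \<Longrightarrow> bb \<gamma> k \<le> b"
    unfolding bb_def by (rule Least_le) blast
  assume "BB \<gamma> k \<ge> 2"
  then obtain b where b: "1 \<le> b" "b < BB \<gamma> k"
    "max (dist_to_int (b * fst \<gamma>)) (dist_to_int (b * snd \<gamma>)) \<le> 1 / sqrt (BB \<gamma> k)"
    using simultaneous_Dirichlet_strict by blast
  have "approx \<gamma> (round (b * fst \<gamma>), round (b * snd \<gamma>)) b \<le> (1 / sqrt (BB \<gamma> k)) / b"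
    unfolding approx_round[OF b(1)] using b by (intro divide_right_mono) auto
  with b(1,2) have "?good b"
    by (auto simp: mult.commute)
  then have "?good (bb \<gamma> k)"
    unfolding bb_def by (rule LeastI)
  then show "1 \<le> bb \<gamma> k" "bb \<gamma> k < BB \<gamma> k"
    by auto
qed

lemma bb_no_common_prime:
  assumes "BB \<gamma> k \<ge> 2" "approx \<gamma> a (bb \<gamma> k) \<le> 1 / (real (bb \<gamma> k) * sqrt (BB \<gamma> k))"
    and "prime p" "p dvd bb \<gamma> k"
  shows "\<not> (int p dvd fst a \<and> int p dvd snd a)"
proof
  assume a: "int p dvd fst a \<and> int p dvd snd a"
  have "p \<ge> 2"
    using assms(3) prime_ge_2_nat by blast
  obtain m where m: "bb \<gamma> k = p * m"
    using assms(4) by (elim dvdE)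
  with bb_ge_1[OF assms(1)] have "m \<ge> 1"
    by (cases m) auto
  with m \<open>p \<ge> 2\<close> have smaller: "1 \<le> bb \<gamma> k div p" "bb \<gamma> k div p < bb \<gamma> k"
    by auto
  have "approx \<gamma> (fst a div int p, snd a div int p) (bb \<gamma> k div p) = approx \<gamma> a (bb \<gamma> k)"
    using approx_cancel_common_factor[of p "bb \<gamma> k" "fst a" "snd a" \<gamma>] assms a \<open>p \<ge> 2\<close> by simp
  also have "\<dots> \<le> 1 / (real (bb \<gamma> k div p) * sqrt (BB \<gamma> k))"
    using assms(1,2) smaller by (elim order.trans) (intro divide_left_mono mult_right_mono; simp)
  finally have "bb \<gamma> k \<le> bb \<gamma> k div p"
    using smaller bb_less_BB[OF assms(1)] by (intro bb_le) auto
  with smaller show False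
    by simp
qed

lemma dvd_linear_mod_iff:
  fixes p q :: nat and D u C :: int
  assumes "p dvd q"
  shows "int p dvd D * (u mod int q) + C \<longleftrightarrow> int p dvd D * u + C"
proof -
  have "[u mod int q = u] (mod int p)"
    using assms by (simp add: cong_def mod_mod_cancel)
  then have "[D * (u mod int q) + C = D * u + C] (mod int p)"
    by (intro cong_add cong_mult) auto
  then show ?thesis
    by (rule cong_dvd_iff)
qed

lemma Sq_mod_iff:
  assumes S: "setting \<gamma> \<sigma> K0 \<psi> A a" and q: "q \<ge> 1"
  obtains D :: nat and C1 C2 :: int where
    "\<And>u1 u2. (u1 mod int q, u2 mod int q) \<in> Sq \<gamma> \<sigma> A a \<psi> q \<longleftrightarrow>
       (\<forall>p\<in>{p. prime p \<and> p dvd q \<and> \<not> p dvd D}. \<not> (int p dvd int D * u1 + C1 \<and> int p dvd int D * u2 + C2))"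
proof -
  define k where "k = kk \<psi> q"
  obtain D C1 C2 where D: "D \<ge> 1" "\<And>p. prime p \<Longrightarrow> p dvd D \<Longrightarrow> \<not> (int p dvd C1 \<and> int p dvd C2)"
    and Sq: "Sq \<gamma> \<sigma> A a \<psi> q = {u \<in> {0..<int q} \<times> {0..<int q}.
               gcd3 (int D * fst u + C1, int D * snd u + C2) (int D * int q) = 1}"
  proof (cases "real (BB \<gamma> k) \<le> 2 powr (\<sigma> * real k)")
    case True
    have "approx \<gamma> (A k) (BB \<gamma> k) < 1 / 2 ^ k"
      using S by (simp add: setting_def)
    with True show thesis
      by (intro that[of "BB \<gamma> k" "fst (A k)" "snd (A k)"] BB_ge_1 BB_no_common_prime)
        (auto simp: Sq_def k_def Let_def)
  next
    case False
    have "2 powr (\<sigma> * real k) \<ge> 1"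
      using S by (simp add: setting_def ge_one_powr_ge_zero)
    with False have "BB \<gamma> k \<ge> 2"
      by linarith
    moreover have "approx \<gamma> (a k) (bb \<gamma> k) \<le> 1 / (real (bb \<gamma> k) * sqrt (BB \<gamma> k))"
      using S \<open>BB \<gamma> k \<ge> 2\<close> by (simp add: setting_def)
    ultimately show thesis
      using False
      by (intro that[of "bb \<gamma> k" "fst (a k)" "snd (a k)"] bb_ge_1 bb_no_common_prime)
        (auto simp: Sq_def k_def Let_def)
  qed
  show thesis
  proof (rule that[of D C1 C2])
    fix u1 u2 :: int
    have "(u1 mod int q, u2 mod int q) \<in> Sq \<gamma> \<sigma> A a \<psi> q \<longleftrightarrow>
        gcd3 (int D * (u1 mod int q) + C1, int D * (u2 mod int q) + C2) (int D * int q) = 1"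
      using q by (simp add: Sq)
    also have "\<dots> \<longleftrightarrow> (\<forall>p\<in>{p. prime p \<and> p dvd q \<and> \<not> p dvd D}.
        \<not> (int p dvd int D * (u1 mod int q) + C1 \<and> int p dvd int D * (u2 mod int q) + C2))"
      by (rule gcd3_eq_1_iff[OF D(1) q D(2)])
    also have "\<dots> \<longleftrightarrow> (\<forall>p\<in>{p. prime p \<and> p dvd q \<and> \<not> p dvd D}.
        \<not> (int p dvd int D * u1 + C1 \<and> int p dvd int D * u2 + C2))"
      by (simp add: dvd_linear_mod_iff)
    finally show "(u1 mod int q, u2 mod int q) \<in> Sq \<gamma> \<sigma> A a \<psi> q \<longleftrightarrow>
        (\<forall>p\<in>{p. prime p \<and> p dvd q \<and> \<not> p dvd D}. \<not> (int p dvd int D * u1 + C1 \<and> int p dvd int D * u2 + C2))" .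
  qed
qed

section \<open>Measure of E_q and E_q' in squares\<close>

lemma distZ2_less_iff:
  "distZ2 x < e \<longleftrightarrow> (\<exists>m1 m2::int. maxnorm (x - (of_int m1, of_int m2)) < e)"
proof -
  let ?S = "{maxnorm (x - (of_int m1, of_int m2)) | m1 m2. True}"
  have "bdd_below ?S"
    by (rule bdd_belowI[of _ 0]) (auto simp: maxnorm_def)
  moreover have "?S \<noteq> {}"
    by blast
  ultimately show ?thesis
    unfolding distZ2_def by (auto simp: cInf_less_iff)
qed

lemma Eq_eq_near_set: "Eq \<gamma> \<psi> q = near_set \<gamma> q (\<psi> q) UNIV"
proof -
  have "distZ2 (x - \<gamma>) < e \<longleftrightarrow> (\<exists>u. maxnorm (x - (of_int (fst u), of_int (snd u)) - \<gamma>) < e)" for x e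
  proof
    assume "distZ2 (x - \<gamma>) < e"
    then obtain m1 m2 :: int where "maxnorm (x - \<gamma> - (of_int m1, of_int m2)) < e"
      by (auto simp: distZ2_less_iff)
    then show "\<exists>u. maxnorm (x - (of_int (fst u), of_int (snd u)) - \<gamma>) < e"
      by (intro exI[of _ "(m1, m2)"]) (simp add: algebra_simps)
  next
    assume "\<exists>u. maxnorm (x - (of_int (fst u), of_int (snd u)) - \<gamma>) < e"
    then obtain u :: "int \<times> int" where "maxnorm (x - (of_int (fst u), of_int (snd u)) - \<gamma>) < e"
      by blast
    then show "distZ2 (x - \<gamma>) < e"
      unfolding distZ2_less_iff by (intro exI[of _ "fst u"] exI[of _ "snd u"]) (simp add: algebra_simps)
  qed
  then show ?thesis
    unfolding Eq_def near_set_def near_box_def by blast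
qed

lemma Eq'_eq_near_set_sieve_set:
  assumes "setting \<gamma> \<sigma> K0 \<psi> A a" "q \<ge> 1" "\<psi> q \<noteq> 0"
  obtains P D C1 C2 where "P \<subseteq> {p. prime p \<and> p dvd q}" "\<And>p. p \<in> P \<Longrightarrow> coprime (int D) (int p)"
    and "Eq' \<gamma> \<sigma> A a \<psi> q = near_set \<gamma> q (\<psi> q) (sieve_set P (\<lambda>_. int D) (\<lambda>_. C1) (\<lambda>_. C2))"
proof -
  obtain D C1 C2 where Sq: "\<And>u1 u2. (u1 mod int q, u2 mod int q) \<in> Sq \<gamma> \<sigma> A a \<psi> q \<longleftrightarrow>
      (\<forall>p\<in>{p. prime p \<and> p dvd q \<and> \<not> p dvd D}. \<not> (int p dvd int D * u1 + C1 \<and> int p dvd int D * u2 + C2))"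
    using Sq_mod_iff[OF assms(1,2)] by blast
  show thesis
  proof (rule that)
    show "coprime (int D) (int p)" if "p \<in> {p. prime p \<and> p dvd q \<and> \<not> p dvd D}" for p
      using that prime_imp_coprime[of p D] by (auto simp: coprime_commute)
    show "Eq' \<gamma> \<sigma> A a \<psi> q = near_set \<gamma> q (\<psi> q)
      (sieve_set {p. prime p \<and> p dvd q \<and> \<not> p dvd D} (\<lambda>_. int D) (\<lambda>_. C1) (\<lambda>_. C2))"
      using assms(3) by (auto simp: Eq'_def near_set_def near_box_def sieve_set_def Sq; blast)
  qed auto
qed

lemma measure_near_set_le:
  assumes "q \<ge> 1" "0 \<le> \<psi>" "\<psi> \<le> 1/2"
  shows "measure lborel (near_set \<gamma> q \<psi> U) \<le> 16 * \<psi>\<^sup>2"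
proof -
  have L: "nat \<lceil>real q * 1 + 1\<rceil> = q + 1"
    by simp
  obtain a1 a2 where "measure lborel (UNIV \<inter> near_set \<gamma> q \<psi> U)
      \<le> (2 * \<psi> / q)\<^sup>2 * card (U \<inter> int_rect a1 a2 (q + 1) (q + 1))"
    using measure_Int_near_set_le_square[where x = 0 and y = 0 and s = 1 and R = UNIV and q = q and \<psi> = \<psi>
        and \<gamma> = \<gamma> and U = U, unfolded L] assms by auto
  also have "\<dots> \<le> (2 * \<psi> / q)\<^sup>2 * (real q + 1)\<^sup>2"
  proof (intro mult_left_mono)
    have "card (U \<inter> int_rect a1 a2 (q + 1) (q + 1)) \<le> card (int_rect a1 a2 (q + 1) (q + 1))"
      by (intro card_mono) auto
    then have "real (card (U \<inter> int_rect a1 a2 (q + 1) (q + 1))) \<le> real ((q + 1) * (q + 1))"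
      by (simp only: card_int_rect of_nat_le_iff)
    then show "real (card (U \<inter> int_rect a1 a2 (q + 1) (q + 1))) \<le> (real q + 1)\<^sup>2"
      by (simp add: power2_eq_square algebra_simps)
  qed simp
  also have "\<dots> = 4 * \<psi>\<^sup>2 * ((real q + 1) / q)\<^sup>2"
    by (simp add: power_divide field_simps)
  also have "\<dots> \<le> 4 * \<psi>\<^sup>2 * 2\<^sup>2"
    using assms(1) by (intro mult_left_mono power_mono) (auto simp: field_simps)
  finally show ?thesis
    by simp
qed

lemma measure_Eq'_ge:
  assumes "setting \<gamma> \<sigma> K0 \<psi> A a" "q \<ge> 1" "\<psi> q > 0"
  shows "(\<psi> q)\<^sup>2 / 4 \<le> measure lborel (Eq' \<gamma> \<sigma> A a \<psi> q)"
proof -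
  have "\<psi> q \<noteq> 0"
    using assms(3) by simp
  then obtain P D C1 C2 where P: "P \<subseteq> {p. prime p \<and> p dvd q}" "\<And>p. p \<in> P \<Longrightarrow> coprime (int D) (int p)"
    and Eq': "Eq' \<gamma> \<sigma> A a \<psi> q = near_set \<gamma> q (\<psi> q) (sieve_set P (\<lambda>_. int D) (\<lambda>_. C1) (\<lambda>_. C2))"
    using Eq'_eq_near_set_sieve_set[OF assms(1,2)] by blast
  have "\<psi> q \<le> 1/2"
    using assms by (simp add: setting_def)
  have "(\<psi> q / q)\<^sup>2 * (real q ^ 2 / 4)
      \<le> (\<psi> q / q)\<^sup>2 * card (sieve_set P (\<lambda>_. int D) (\<lambda>_. C1) (\<lambda>_. C2) \<inter> int_rect \<lceil>- fst \<gamma>\<rceil> \<lceil>- snd \<gamma>\<rceil> q q)"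
    using assms(2) P by (intro mult_left_mono card_sieve_set_square_ge) auto
  also have "\<dots> \<le> measure lborel (Eq' \<gamma> \<sigma> A a \<psi> q)"
    unfolding Eq' using assms(2,3) \<open>\<psi> q \<le> 1/2\<close> by (rule measure_near_set_ge_unit_square)
  finally show ?thesis
    using assms(2) by (simp add: power_divide)
qed

lemma measure_Eq_le_Eq':
  assumes "setting \<gamma> \<sigma> K0 \<psi> A a" "q \<ge> 1"
  shows "measure lborel (Eq \<gamma> \<psi> q) \<le> 64 * measure lborel (Eq' \<gamma> \<sigma> A a \<psi> q)"
proof -
  have \<psi>: "0 \<le> \<psi> q" "\<psi> q \<le> 1/2"
    using assms by (auto simp: setting_def)
  have "measure lborel (Eq \<gamma> \<psi> q) \<le> 16 * (\<psi> q)\<^sup>2"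
    unfolding Eq_eq_near_set using assms(2) \<psi> by (rule measure_near_set_le)
  also have "\<dots> \<le> 64 * measure lborel (Eq' \<gamma> \<sigma> A a \<psi> q)"
    using measure_Eq'_ge[OF assms] \<psi> by (cases "\<psi> q = 0") auto
  finally show ?thesis .
qed

text \<open>The error term 3^omega(q) is O(sqrt q) and is absorbed into the density, which is at
  least 1/4.\<close>
lemma card_sieve_set_square_bounds:
  assumes "q \<ge> 1" "P \<subseteq> {p. prime p \<and> p dvd q}" "\<And>p. p \<in> P \<Longrightarrow> coprime (c p) (int p)"
  defines "V \<equiv> 4 * 3 ^ 9 * sqrt (real q)"
  shows "sieve_density P * ((real L)\<^sup>2 - V * (2 * real L + 4)) \<le> card (sieve_set P c e1 e2 \<inter> int_rect a1 a2 L L)"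
    and "card (sieve_set P c e1 e2 \<inter> int_rect a1 a2 L L) \<le> sieve_density P * ((real L)\<^sup>2 + V * (2 * real L + 4))"
proof -
  have P: "finite P" "\<And>p. p \<in> P \<Longrightarrow> prime p"
    using assms(1,2) finite_subset[OF _ finite_prime_divisors] by auto
  have "1/4 \<le> sieve_density P"
    using P prime_ge_2_nat by (intro sieve_density_ge) auto
  moreover have "(3::real) ^ card P \<le> 3 ^ 9 * sqrt (real q)"
    using assms(1,2) by (intro three_pow_card_prime_divisors_le) auto
  moreover have "3 ^ 9 * sqrt (real q) \<le> sieve_density P * V"
    using mult_right_mono[OF \<open>1/4 \<le> sieve_density P\<close>, of V] by (simp add: V_def)
  ultimately have "3 ^ card P * (2 * real L + 4) \<le> sieve_density P * V * (2 * real L + 4)"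
    by (intro mult_right_mono) auto
  with card_sieve_set_int_rect[OF P assms(3), of e1 e2 a1 a2 L L]
  show "sieve_density P * ((real L)\<^sup>2 - V * (2 * real L + 4)) \<le> card (sieve_set P c e1 e2 \<inter> int_rect a1 a2 L L)"
    and "card (sieve_set P c e1 e2 \<inter> int_rect a1 a2 L L) \<le> sieve_density P * ((real L)\<^sup>2 + V * (2 * real L + 4))"
    by (auto simp: abs_le_iff algebra_simps power2_eq_square)
qed

text \<open>Up to the factor (2 psi / q)^2 times the sieve density, these bound the measure of
  E_q' inside a square of side X / q.\<close>
definition square_count_lower :: "nat \<Rightarrow> real \<Rightarrow> real" where
  "square_count_lower q X = (X - 2)\<^sup>2 - 4 * 3 ^ 9 * sqrt (real q) * (2 * X + 4)"

definition square_count_upper :: "nat \<Rightarrow> real \<Rightarrow> real" where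
  "square_count_upper q X = (X + 2)\<^sup>2 + 4 * 3 ^ 9 * sqrt (real q) * (2 * X + 8)"

lemma measure_Int_near_set_sieve_set_ge:
  assumes q: "q \<ge> 1" and \<psi>: "0 \<le> \<psi>" "\<psi> \<le> 1/2"
    and P: "P \<subseteq> {p. prime p \<and> p dvd q}" "\<And>p. p \<in> P \<Longrightarrow> coprime (c p) (int p)"
    and R: "R \<in> sets lborel" "{x<..<x + s} \<times> {y<..<y + s} \<subseteq> R \<inter> {0..1} \<times> {0..1}"
    and s: "2 \<le> q * s"
  shows "(2 * \<psi> / q)\<^sup>2 * sieve_density P * square_count_lower q (q * s)
    \<le> measure lborel (R \<inter> near_set \<gamma> q \<psi> (sieve_set P c e1 e2))"
proof -
  let ?U = "sieve_set P c e1 e2" and ?V = "4 * 3 ^ 9 * sqrt (real q)"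
  define n where "n = nat \<lfloor>q * s - 1\<rfloor>"
  have "0 \<le> \<lfloor>q * s - 1\<rfloor>"
    using s by linarith
  then have "real n = \<lfloor>q * s\<rfloor> - 1"
    by (simp add: n_def)
  then have n: "q * s - 2 \<le> real n" "real n \<le> q * s"
    using floor_correct[of "q * s"] by linarith+
  obtain a1 a2 where inner: "(2 * \<psi> / q)\<^sup>2 * card (?U \<inter> int_rect a1 a2 n n)
      \<le> measure lborel (R \<inter> near_set \<gamma> q \<psi> ?U)"
    unfolding n_def using q \<psi> R by (rule measure_Int_near_set_ge_square)
  have "square_count_lower q (q * s) \<le> (real n)\<^sup>2 - ?V * (2 * real n + 4)"
    unfolding square_count_lower_def using n s by (intro diff_mono power_mono mult_left_mono) auto
  then have "sieve_density P * square_count_lower q (q * s) \<le> sieve_density P * ((real n)\<^sup>2 - ?V * (2 * real n + 4))"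
    using sieve_density_nonneg by (rule mult_left_mono)
  also have "\<dots> \<le> card (?U \<inter> int_rect a1 a2 n n)"
    by (rule card_sieve_set_square_bounds(1)[OF q P])
  finally have "(2 * \<psi> / q)\<^sup>2 * sieve_density P * square_count_lower q (q * s)
      \<le> (2 * \<psi> / q)\<^sup>2 * card (?U \<inter> int_rect a1 a2 n n)"
    unfolding mult.assoc by (rule mult_left_mono) simp
  with inner show ?thesis
    by linarith
qed

lemma measure_Int_near_set_sieve_set_le:
  assumes q: "q \<ge> 1" and \<psi>: "0 \<le> \<psi>" "\<psi> \<le> 1/2"
    and P: "P \<subseteq> {p. prime p \<and> p dvd q}" "\<And>p. p \<in> P \<Longrightarrow> coprime (c p) (int p)"
    and R: "R \<in> sets lborel" "R \<inter> {0..1} \<times> {0..1} \<subseteq> {x..x + s} \<times> {y..y + s}"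
    and s: "0 \<le> s"
  shows "measure lborel (R \<inter> near_set \<gamma> q \<psi> (sieve_set P c e1 e2))
    \<le> (2 * \<psi> / q)\<^sup>2 * sieve_density P * square_count_upper q (q * s)"
proof -
  let ?U = "sieve_set P c e1 e2" and ?V = "4 * 3 ^ 9 * sqrt (real q)"
  define m where "m = nat \<lceil>q * s + 1\<rceil>"
  have "0 \<le> real q * s"
    using s by simp
  then have "0 \<le> \<lceil>q * s\<rceil>"
    by linarith
  then have "real m = \<lceil>q * s\<rceil> + 1"
    by (simp add: m_def)
  then have m: "real m \<le> q * s + 2"
    using ceiling_correct[of "q * s"] by linarith
  obtain a1 a2 where outer: "measure lborel (R \<inter> near_set \<gamma> q \<psi> ?U)
      \<le> (2 * \<psi> / q)\<^sup>2 * card (?U \<inter> int_rect a1 a2 m m)"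
    unfolding m_def using q \<psi> R by (rule measure_Int_near_set_le_square)
  have "card (?U \<inter> int_rect a1 a2 m m) \<le> sieve_density P * ((real m)\<^sup>2 + ?V * (2 * real m + 4))"
    by (rule card_sieve_set_square_bounds(2)[OF q P])
  also have "(real m)\<^sup>2 + ?V * (2 * real m + 4) \<le> square_count_upper q (q * s)"
    unfolding square_count_upper_def
  proof (rule add_mono)
    show "(real m)\<^sup>2 \<le> (q * s + 2)\<^sup>2"
      using m by (intro power_mono) auto
    show "?V * (2 * real m + 4) \<le> ?V * (2 * (q * s) + 8)"
      using m by (intro mult_left_mono) auto
  qed
  then have "sieve_density P * ((real m)\<^sup>2 + ?V * (2 * real m + 4)) \<le> sieve_density P * square_count_upper q (q * s)"
    using sieve_density_nonneg by (rule mult_left_mono)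
  finally have "(2 * \<psi> / q)\<^sup>2 * card (?U \<inter> int_rect a1 a2 m m)
      \<le> (2 * \<psi> / q)\<^sup>2 * sieve_density P * square_count_upper q (q * s)"
    unfolding mult.assoc by (rule mult_left_mono) simp
  with outer show ?thesis
    by linarith
qed

lemma measure_Int_Eq'_square_bounds:
  assumes S: "setting \<gamma> \<sigma> K0 \<psi> A a" and q: "q \<ge> 1" and "0 < \<psi> q"
  shows "\<exists>w>0.
    (\<forall>R x y s. R \<in> sets lborel \<and> {x<..<x + s} \<times> {y<..<y + s} \<subseteq> R \<inter> {0..1} \<times> {0..1} \<and> 2 \<le> real q * s \<longrightarrow>
      w * square_count_lower q (real q * s) \<le> measure lborel (R \<inter> Eq' \<gamma> \<sigma> A a \<psi> q)) \<and>
    (\<forall>R x y s. R \<in> sets lborel \<and> R \<inter> {0..1} \<times> {0..1} \<subseteq> {x..x + s} \<times> {y..y + s} \<and> 0 \<le> s \<longrightarrow>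
      measure lborel (R \<inter> Eq' \<gamma> \<sigma> A a \<psi> q) \<le> w * square_count_upper q (real q * s))"
proof -
  have \<psi>: "0 \<le> \<psi> q" "\<psi> q \<le> 1/2"
    using S q by (auto simp: setting_def)
  have "\<psi> q \<noteq> 0"
    using \<open>0 < \<psi> q\<close> by simp
  then obtain P D C1 C2 where P: "P \<subseteq> {p. prime p \<and> p dvd q}" "\<And>p. p \<in> P \<Longrightarrow> coprime (int D) (int p)"
    and Eq': "Eq' \<gamma> \<sigma> A a \<psi> q = near_set \<gamma> q (\<psi> q) (sieve_set P (\<lambda>_. int D) (\<lambda>_. C1) (\<lambda>_. C2))"
    using Eq'_eq_near_set_sieve_set[OF S q] by blast
  have "1/4 \<le> sieve_density P"
    using P(1) q finite_subset[OF _ finite_prime_divisors] prime_ge_2_nat by (intro sieve_density_ge) auto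
  show ?thesis
  proof (intro exI[of _ "(2 * \<psi> q / q)\<^sup>2 * sieve_density P"] conjI allI impI)
    show "0 < (2 * \<psi> q / q)\<^sup>2 * sieve_density P"
      using \<open>1/4 \<le> sieve_density P\<close> \<open>0 < \<psi> q\<close> q by simp
  next
    fix R and x y s :: real
    assume "R \<in> sets lborel \<and> {x<..<x + s} \<times> {y<..<y + s} \<subseteq> R \<inter> {0..1} \<times> {0..1} \<and> 2 \<le> real q * s"
    then show "(2 * \<psi> q / q)\<^sup>2 * sieve_density P * square_count_lower q (real q * s)
        \<le> measure lborel (R \<inter> Eq' \<gamma> \<sigma> A a \<psi> q)"
      unfolding Eq' by (elim conjE) (rule measure_Int_near_set_sieve_set_ge[OF q \<psi> P])
  next
    fix R and x y s :: real
    assume "R \<in> sets lborel \<and> R \<inter> {0..1} \<times> {0..1} \<subseteq> {x..x + s} \<times> {y..y + s} \<and> 0 \<le> s"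
    then show "measure lborel (R \<inter> Eq' \<gamma> \<sigma> A a \<psi> q)
        \<le> (2 * \<psi> q / q)\<^sup>2 * sieve_density P * square_count_upper q (real q * s)"
      unfolding Eq' by (elim conjE) (rule measure_Int_near_set_sieve_set_le[OF q \<psi> P])
  qed
qed

lemma maxball_eq_box: "maxball c r = box (fst c - r, snd c - r) (fst c + r, snd c + r)"
  by (auto simp: maxball_def maxnorm_def abs_less_iff mem_box Basis_prod_def)

lemma measure_maxball: "r > 0 \<Longrightarrow> measure lborel (maxball c r) = 4 * r\<^sup>2"
  by (simp add: maxball_eq_box measure_lborel_box_eq Basis_prod_def power2_eq_square)

lemma quotient_bounds:
  fixes num den k a b c d K :: real
  assumes "0 < k" "0 < K" "0 \<le> a" "0 < c"
    and "k * a \<le> num" "num \<le> k * b" "k * c \<le> den" "den \<le> k * d"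
  shows "a / (K * d) \<le> num / (K * den)" and "num / (K * den) \<le> b / (K * c)"
proof -
  have den: "0 < den"
    using assms by (meson mult_pos_pos order_less_le_trans)
  have "c \<le> d"
    using assms by (meson mult_le_cancel_left_pos order_trans)
  then have d: "0 < d"
    using assms by linarith
  have num: "0 \<le> num"
    using assms by (meson mult_nonneg_nonneg order_trans less_imp_le)
  have "a / (K * d) = (k * a) / (K * (k * d))"
    using assms by simp
  also have "\<dots> \<le> num / (K * (k * d))"
    using assms d by (intro divide_right_mono) auto
  also have "\<dots> \<le> num / (K * den)"
    using assms den d num by (intro divide_left_mono) auto
  finally show "a / (K * d) \<le> num / (K * den)" .
  have "num / (K * den) \<le> (k * b) / (K * den)"
    using assms den by (intro divide_right_mono) auto
  also have "\<dots> \<le> (k * b) / (K * (k * c))"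
    using assms den num by (intro divide_left_mono) auto
  also have "\<dots> = b / (K * c)"
    using assms by simp
  finally show "num / (K * den) \<le> b / (K * c)" .
qed

lemma Eq'_ball_ratio_bounds:
  assumes S: "setting \<gamma> \<sigma> K0 \<psi> A a" and q: "q \<ge> 1" and "0 < \<psi> q"
    and r: "0 < r" and ball: "maxball ctr r \<subseteq> {0..<1} \<times> {0..<1}"
    and large: "2 \<le> q * (2 * r)" "2 \<le> real q" "0 \<le> square_count_lower q (q * (2 * r))"
      "0 < square_count_lower q q"
  shows "square_count_lower q (q * (2 * r)) / (4 * r\<^sup>2 * square_count_upper q q)
      \<le> measure lborel (maxball ctr r \<inter> Eq' \<gamma> \<sigma> A a \<psi> q) /
        (measure lborel (maxball ctr r) * measure lborel (Eq' \<gamma> \<sigma> A a \<psi> q))"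
    and "measure lborel (maxball ctr r \<inter> Eq' \<gamma> \<sigma> A a \<psi> q) /
        (measure lborel (maxball ctr r) * measure lborel (Eq' \<gamma> \<sigma> A a \<psi> q))
      \<le> square_count_upper q (q * (2 * r)) / (4 * r\<^sup>2 * square_count_lower q q)"
proof -
  obtain w where "0 < w"
    and lower: "\<forall>R x y s. R \<in> sets lborel \<and> {x<..<x + s} \<times> {y<..<y + s} \<subseteq> R \<inter> {0..1} \<times> {0..1} \<and>
      2 \<le> real q * s \<longrightarrow> w * square_count_lower q (real q * s) \<le> measure lborel (R \<inter> Eq' \<gamma> \<sigma> A a \<psi> q)"
    and upper: "\<forall>R x y s. R \<in> sets lborel \<and> R \<inter> {0..1} \<times> {0..1} \<subseteq> {x..x + s} \<times> {y..y + s} \<and>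
      0 \<le> s \<longrightarrow> measure lborel (R \<inter> Eq' \<gamma> \<sigma> A a \<psi> q) \<le> w * square_count_upper q (real q * s)"
    using measure_Int_Eq'_square_bounds[OF S q \<open>0 < \<psi> q\<close>] by (elim exE conjE) (rule that)
  have "{fst ctr - r<..<fst ctr - r + 2 * r} \<times> {snd ctr - r<..<snd ctr - r + 2 * r} = maxball ctr r"
    by (auto simp: maxball_def maxnorm_def abs_less_iff)
  with ball have inner: "{fst ctr - r<..<fst ctr - r + 2 * r} \<times> {snd ctr - r<..<snd ctr - r + 2 * r}
      \<subseteq> maxball ctr r \<inter> {0..1} \<times> {0..1}"
    by auto
  have outer: "maxball ctr r \<inter> {0..1} \<times> {0..1}
      \<subseteq> {fst ctr - r..fst ctr - r + 2 * r} \<times> {snd ctr - r..snd ctr - r + 2 * r}"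
    by (auto simp: maxball_def maxnorm_def abs_le_iff)
  have ball_sets: "maxball ctr r \<in> sets lborel"
    by (simp add: maxball_eq_box)
  have num: "w * square_count_lower q (q * (2 * r)) \<le> measure lborel (maxball ctr r \<inter> Eq' \<gamma> \<sigma> A a \<psi> q)"
    "measure lborel (maxball ctr r \<inter> Eq' \<gamma> \<sigma> A a \<psi> q) \<le> w * square_count_upper q (q * (2 * r))"
    using lower[rule_format, OF conjI[OF ball_sets conjI[OF inner large(1)]]]
      upper[rule_format, OF conjI[OF ball_sets conjI[OF outer]]] r by simp_all
  have "w * square_count_lower q (q * 1) \<le> measure lborel (UNIV \<inter> Eq' \<gamma> \<sigma> A a \<psi> q)"
    using large(2) lower[rule_format, of UNIV 0 1 0] by (auto simp: subset_eq)
  moreover have "measure lborel (UNIV \<inter> Eq' \<gamma> \<sigma> A a \<psi> q) \<le> w * square_count_upper q (q * 1)"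
    using upper[rule_format, of UNIV 0 1 0] by auto
  ultimately have den: "w * square_count_lower q q \<le> measure lborel (Eq' \<gamma> \<sigma> A a \<psi> q)"
    "measure lborel (Eq' \<gamma> \<sigma> A a \<psi> q) \<le> w * square_count_upper q q"
    by simp_all
  have "0 < 4 * r\<^sup>2"
    using r by simp
  from quotient_bounds[OF \<open>0 < w\<close> this large(3,4) num den] show
    "square_count_lower q (q * (2 * r)) / (4 * r\<^sup>2 * square_count_upper q q)
      \<le> measure lborel (maxball ctr r \<inter> Eq' \<gamma> \<sigma> A a \<psi> q) /
        (measure lborel (maxball ctr r) * measure lborel (Eq' \<gamma> \<sigma> A a \<psi> q))"
    and "measure lborel (maxball ctr r \<inter> Eq' \<gamma> \<sigma> A a \<psi> q) /
        (measure lborel (maxball ctr r) * measure lborel (Eq' \<gamma> \<sigma> A a \<psi> q))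
      \<le> square_count_upper q (q * (2 * r)) / (4 * r\<^sup>2 * square_count_lower q q)"
    by (simp_all add: measure_maxball[OF r])
qed

lemma Eq'_ball_ratio_tendsto:
  assumes S: "setting \<gamma> \<sigma> K0 \<psi> A a" and r: "0 < r" and ball: "maxball ctr r \<subseteq> {0..<1} \<times> {0..<1}"
  shows "filterlim (\<lambda>q. measure lborel (maxball ctr r \<inter> Eq' \<gamma> \<sigma> A a \<psi> q) /
      (measure lborel (maxball ctr r) * measure lborel (Eq' \<gamma> \<sigma> A a \<psi> q)))
    (nhds 1) (inf sequentially (principal {q. 0 < \<psi> q}))"
proof -
  let ?lower = "\<lambda>q. square_count_lower q (q * (2 * r)) / (4 * r\<^sup>2 * square_count_upper q q)"
  let ?upper = "\<lambda>q. square_count_upper q (q * (2 * r)) / (4 * r\<^sup>2 * square_count_lower q q)"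
  let ?f = "\<lambda>q. measure lborel (maxball ctr r \<inter> Eq' \<gamma> \<sigma> A a \<psi> q) /
      (measure lborel (maxball ctr r) * measure lborel (Eq' \<gamma> \<sigma> A a \<psi> q))"
  let ?F = "inf sequentially (principal {q. 0 < \<psi> q})"
  have lim: "(?lower \<longlongrightarrow> 1) sequentially" "(?upper \<longlongrightarrow> 1) sequentially"
    unfolding square_count_lower_def square_count_upper_def using r by real_asymp+
  have "eventually (\<lambda>q. 1 \<le> q \<and> 2 \<le> q * (2 * r) \<and> 2 \<le> real q \<and>
      0 \<le> square_count_lower q (q * (2 * r)) \<and> 0 < square_count_lower q q) sequentially"
  proof (intro eventually_conj)
    show "eventually (\<lambda>q. 1 \<le> q) sequentially"
      by (rule eventually_ge_at_top)
    show "eventually (\<lambda>q. 2 \<le> q * (2 * r)) sequentially"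
      "eventually (\<lambda>q. 2 \<le> real q) sequentially"
      "eventually (\<lambda>q. 0 \<le> square_count_lower q (q * (2 * r))) sequentially"
      "eventually (\<lambda>q. 0 < square_count_lower q q) sequentially"
      unfolding square_count_lower_def using r by real_asymp+
  qed
  then have "eventually (\<lambda>q. ?lower q \<le> ?f q \<and> ?f q \<le> ?upper q) ?F"
    unfolding eventually_inf_principal
    by (rule eventually_mono) (use Eq'_ball_ratio_bounds[OF S _ _ r ball] in auto)
  then have "eventually (\<lambda>q. ?lower q \<le> ?f q) ?F" "eventually (\<lambda>q. ?f q \<le> ?upper q) ?F"
    by (auto elim: eventually_mono)
  moreover have "(?lower \<longlongrightarrow> 1) ?F" "(?upper \<longlongrightarrow> 1) ?F"
    using lim by (auto intro: tendsto_mono[OF inf_le1])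
  ultimately show ?thesis
    by (rule tendsto_sandwich)
qed

theorem lemma3p4:
  shows "\<exists>c::real>0. \<forall>\<gamma> \<sigma> K0 \<psi> A a. setting \<gamma> \<sigma> K0 \<psi> A a \<longrightarrow>
     (\<forall>q\<ge>1. measure lborel (Eq' \<gamma> \<sigma> A a \<psi> q) \<ge> c * measure lborel (Eq \<gamma> \<psi> q)) \<and>
     (\<forall>ctr r. 0 < r \<and> maxball ctr r \<subseteq> {0..<1} \<times> {0..<1} \<longrightarrow>
        filterlim (\<lambda>q. measure lborel (maxball ctr r \<inter> Eq' \<gamma> \<sigma> A a \<psi> q) /
                       (measure lborel (maxball ctr r) * measure lborel (Eq' \<gamma> \<sigma> A a \<psi> q)))
          (nhds 1) (inf sequentially (principal {q. 0 < \<psi> q})))"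
proof (intro exI[of _ "1/64"] conjI allI impI)
  fix \<gamma> \<sigma> K0 \<psi> A a and q :: nat
  assume "setting \<gamma> \<sigma> K0 \<psi> A a" "1 \<le> q"
  then show "1/64 * measure lborel (Eq \<gamma> \<psi> q) \<le> measure lborel (Eq' \<gamma> \<sigma> A a \<psi> q)"
    using measure_Eq_le_Eq' by fastforce
qed (auto intro: Eq'_ball_ratio_tendsto)

end
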